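(* Consider a sequence of total systems indexed by the size $N$ (the system S is fixed and the bath grows). For each $N$, the total Hamiltonian $H=H^{(N)}$ on $\mathcal{H}_{\mathrm{S}}\otimes\mathcal{H}_{\mathrm{B}}^{(N)}$ (finite-dimensional) has non-degenerate spectrum with eigenpairs $(E_j,|E_j\rangle)$, and the initial state is a product $\rho_{\mathrm{S}}(0)\otimes\rho_{\mathrm{B}}(0)$ (depending on $N$). Fix an energy density $u$ and widths $\Delta=\Delta_N>0$ with $\Delta_N=\mathcal{O}(N^\alpha)$ for some $0\le\alpha<1$, and let $M_{uN,\Delta}:=\{j:|E_j-uN|\le\Delta\}$ (assumed nonempty) and $\rho^{\mathrm{mc}}:=\frac{1}{|M_{uN,\Delta}|}\sum_{j\in M_{uN,\Delta}}|E_j\rangle\langle E_j|$. Assume: (i) (strong ETH) for every $\epsilon>0$, for all sufficiently large $N$, $\mathcal{D}_{\mathrm{S}}(|E_j\rangle\langle E_j|,\rho^{\mathrm{mc}})<\epsilon$ for every $j\in M_{uN,\Delta}$; (ii) (initial energy distribution) with $P_{\mathrm{out}}:=\sum_{j\notin M_{uN,\Delta}}|E_j\rangle\langle E_j|$, for every $\epsilon>0$, $\mathrm{Tr}[P_{\mathrm{out}}\,\rho_{\mathrm{S}}(0)\otimes\rho_{\mathrm{B}}(0)]<\epsilon$ for all sufficiently large $N$. Then for every $\epsilon>0$, $\mathcal{D}_{\mathrm{S}}(\omega,\rho^{\mathrm{mc}})<\epsilon$ for all sufficiently large $N$, where $\omega$ is the diagonal ensemble of $\rho_{\mathrm{S}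}(0)\otimes\rho_{\mathrm{B}}(0)$.
   Context: The diagonal ensemble of an initial state $\rho(0)$ is $\omega:=\lim_{\tau\to\infty}\frac1\tau\int_0^\tau e^{-iHt}\rho(0)e^{iHt}\,dt$; for non-degenerate $H$ this equals $\sum_j|E_j\rangle\langle E_j|\rho(0)|E_j\rangle\langle E_j|$. For density operators $\rho,\tau$ on $\mathcal{H}_{\mathrm{S}}\otimes\mathcal{H}_{\mathrm{B}}$, the local trace distance is $\mathcal{D}_{\mathrm{S}}(\rho,\tau):=\frac12\mathrm{Tr}\bigl|\mathrm{Tr}_{\mathrm{B}}\rho-\mathrm{Tr}_{\mathrm{B}}\tau\bigr|$. *)

theory Defs
  imports "Jordan_Normal_Form.Matrix" "HOL-Library.Landau_Symbols"
begin

(* Composite space H_S (x) H_B of dimension dS * dB; composite basis index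
   of (a,b) (a < dS system index, b < dB bath index) is a * dB + b. *)

definition mtrace :: "complex mat \<Rightarrow> complex" where
  "mtrace A = (\<Sum>i<dim_row A. A $$ (i, i))"

definition dagger :: "complex mat \<Rightarrow> complex mat" where
  "dagger A = mat (dim_col A) (dim_row A) (\<lambda>(i, j). cnj (A $$ (j, i)))"

definition hermitian :: "complex mat \<Rightarrow> bool" where
  "hermitian A \<longleftrightarrow> dim_row A = dim_col A \<and> dagger A = A"

definition braket :: "complex vec \<Rightarrow> complex vec \<Rightarrow> complex" where
  "braket v w = (\<Sum>i<dim_vec v. cnj (v $ i) * w $ i)"

definition psd :: "complex mat \<Rightarrow> bool" where
  "psd A \<longleftrightarrow> hermitian A \<and>
     (\<forall>v \<in> carrier_vec (dim_row A). Re (braket v (A *\<^sub>v v)) \<ge> 0)"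

definition density_op :: "nat \<Rightarrow> complex mat \<Rightarrow> bool" where
  "density_op n \<rho> \<longleftrightarrow> \<rho> \<in> carrier_mat n n \<and> psd \<rho> \<and> mtrace \<rho> = 1"

definition mat_abs :: "complex mat \<Rightarrow> complex mat" where
  "mat_abs A = (THE B. psd B \<and> B * B = dagger A * A)"

definition trace_norm :: "complex mat \<Rightarrow> real" where
  "trace_norm A = Re (mtrace (mat_abs A))"

definition kron :: "complex mat \<Rightarrow> complex mat \<Rightarrow> complex mat" where
  "kron A B = mat (dim_row A * dim_row B) (dim_col A * dim_col B)
     (\<lambda>(i, j). A $$ (i div dim_row B, j div dim_col B) * B $$ (i mod dim_row B, j mod dim_col B))"

definition ptrace_B :: "nat \<Rightarrow> complex mat \<Rightarrow> complex mat" where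
  "ptrace_B dB \<rho> = mat (dim_row \<rho> div dB) (dim_col \<rho> div dB)
     (\<lambda>(a, a'). \<Sum>b<dB. \<rho> $$ (a * dB + b, a' * dB + b))"

definition local_trace_dist :: "nat \<Rightarrow> complex mat \<Rightarrow> complex mat \<Rightarrow> real" where
  "local_trace_dist dB \<rho> \<tau> = trace_norm (ptrace_B dB \<rho> - ptrace_B dB \<tau>) / 2"

definition ketbra :: "complex vec \<Rightarrow> complex mat" where
  "ketbra v = mat (dim_vec v) (dim_vec v) (\<lambda>(i, j). v $ i * cnj (v $ j))"

definition wsum_proj :: "nat \<Rightarrow> (nat \<Rightarrow> complex) \<Rightarrow> (nat \<Rightarrow> complex vec) \<Rightarrow> nat set \<Rightarrow> complex mat" where
  "wsum_proj n c v S = mat n n (\<lambda>(a, b). \<Sum>j\<in>S. c j * (v j $ a * cnj (v j $ b)))"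

(* diagonal ensemble of rho for a non-degenerate Hamiltonian with orthonormal
   eigenbasis v_0..v_{n-1}:  sum_j |E_j><E_j| rho |E_j><E_j| *)
definition diag_ensemble :: "nat \<Rightarrow> (nat \<Rightarrow> complex vec) \<Rightarrow> complex mat \<Rightarrow> complex mat" where
  "diag_ensemble n v \<rho> = wsum_proj n (\<lambda>j. braket (v j) (\<rho> *\<^sub>v v j)) v {..<n}"

definition shell :: "nat \<Rightarrow> (nat \<Rightarrow> real) \<Rightarrow> real \<Rightarrow> real \<Rightarrow> nat set" where
  "shell n E e \<Delta> = {j. j < n \<and> \<bar>E j - e\<bar> \<le> \<Delta>}"

definition rho_mc :: "nat \<Rightarrow> (nat \<Rightarrow> complex vec) \<Rightarrow> nat set \<Rightarrow> complex mat" where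
  "rho_mc n v M = wsum_proj n (\<lambda>_. 1 / of_nat (card M)) v M"

end

(*
  Write q_j = <E_j|rho(0)|E_j> for the weights of the diagonal ensemble omega = sum_j q_j |E_j><E_j|.
  Since the partial trace is linear and sum_j q_j = 1, the difference Tr_B omega - Tr_B rho_mc is the
  convex combination sum_j q_j (Tr_B |E_j><E_j| - Tr_B rho_mc), and convexity of the trace norm gives
  D_S(omega, rho_mc) <= sum_j q_j D_S(|E_j><E_j|, rho_mc).  Inside the energy shell each term is small
  by strong ETH; outside it each term is at most 1, and the total weight there is Tr[P_out rho(0)].

  Since the trace norm is defined via the positive square root of A^dagger A, the convexity step
  rests on Tr|A| = sum |eigenvalues| for Hermitian A (spectral theorem plus uniqueness of positive
  square roots), from which the triangle inequality follows by a variational bound.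
*)
theory Submission
  imports Defs "Jordan_Normal_Form.Spectral_Radius"
begin

section \<open>Inner products and Hermitian matrices\<close>

lemma cnj_braket: "dim_vec x = dim_vec y \<Longrightarrow> cnj (braket x y) = braket y x"
  unfolding braket_def by (simp add: mult.commute)

lemma braket_smult_left: "braket (c \<cdot>\<^sub>v x) y = cnj c * braket x y"
  by (simp add: braket_def sum_distrib_left mult_ac)

lemma braket_smult_right: "dim_vec y = dim_vec x \<Longrightarrow> braket x (c \<cdot>\<^sub>v y) = c * braket x y"
  by (simp add: braket_def sum_distrib_left mult_ac)

lemma braket_add_right:
  "dim_vec y = dim_vec x \<Longrightarrow> dim_vec z = dim_vec x \<Longrightarrow> braket x (y + z) = braket x y + braket x z"
  by (simp add: braket_def sum.distrib distrib_left)

lemma braket_zero_right: "braket x (0\<^sub>v (dim_vec x)) = 0"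
  by (simp add: braket_def)

lemma braket_self: "braket x x = of_real (\<Sum>i<dim_vec x. (cmod (x $ i))\<^sup>2)"
proof -
  have "cnj z * z = of_real ((cmod z)\<^sup>2)" for z :: complex
    by (simp add: complex_norm_square[symmetric] mult.commute del: of_real_power)
  thus ?thesis unfolding braket_def by simp
qed

lemma braket_self_eq_0_iff: "x \<in> carrier_vec n \<Longrightarrow> braket x x = 0 \<longleftrightarrow> x = 0\<^sub>v n"
  using conjugate_square_eq_0_vec[of x n]
  by (simp add: braket_def scalar_prod_def atLeast0LessThan mult.commute)

lemma braket_vec_sum:
  assumes "y \<in> carrier_vec n"
  shows "braket y (vec n (\<lambda>a. \<Sum>k\<in>S. f k * z k $ a)) = (\<Sum>k\<in>S. f k * braket y (z k))"
proof -
  have "braket y (vec n (\<lambda>a. \<Sum>k\<in>S. f k * z k $ a)) = (\<Sum>a<n. \<Sum>k\<in>S. cnj (y $ a) * (f k * z k $ a))"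
    using assms by (auto simp: braket_def sum_distrib_left)
  also have "\<dots> = (\<Sum>k\<in>S. \<Sum>a<n. cnj (y $ a) * (f k * z k $ a))" by (rule sum.swap)
  also have "\<dots> = (\<Sum>k\<in>S. f k * braket y (z k))"
    using assms by (auto simp: braket_def sum_distrib_left mult_ac intro!: sum.cong)
  finally show ?thesis .
qed

lemma braket_mult_mat_vec:
  "A \<in> carrier_mat n n \<Longrightarrow> x \<in> carrier_vec n \<Longrightarrow> y \<in> carrier_vec n \<Longrightarrow>
    braket x (A *\<^sub>v y) = (\<Sum>i<n. \<Sum>j<n. cnj (x $ i) * A $$ (i, j) * y $ j)"
  by (auto simp: braket_def scalar_prod_def atLeast0LessThan row_def sum_distrib_left mult.assoc)

lemma mult_mat_vec_vec_sum:
  fixes A :: "complex mat"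
  assumes A: "A \<in> carrier_mat n n" and z: "\<And>i. i \<in> I \<Longrightarrow> z i \<in> carrier_vec n"
  shows "A *\<^sub>v vec n (\<lambda>a. \<Sum>i\<in>I. f i * z i $ a) = vec n (\<lambda>a. \<Sum>i\<in>I. f i * (A *\<^sub>v z i) $ a)"
proof (rule eq_vecI)
  fix a assume "a < dim_vec (vec n (\<lambda>a. \<Sum>i\<in>I. f i * (A *\<^sub>v z i) $ a))"
  hence a: "a < n" by simp
  have "(A *\<^sub>v vec n (\<lambda>a. \<Sum>i\<in>I. f i * z i $ a)) $ a = (\<Sum>b<n. A $$ (a, b) * (\<Sum>i\<in>I. f i * z i $ b))"
    using A a by (simp add: scalar_prod_def atLeast0LessThan row_def)
  also have "\<dots> = (\<Sum>b<n. \<Sum>i\<in>I. f i * (A $$ (a, b) * z i $ b))"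
    unfolding sum_distrib_left by (intro sum.cong refl) (simp add: ac_simps)
  also have "\<dots> = (\<Sum>i\<in>I. \<Sum>b<n. f i * (A $$ (a, b) * z i $ b))"
    by (rule sum.swap)
  also have "\<dots> = (\<Sum>i\<in>I. f i * (A *\<^sub>v z i) $ a)"
  proof (intro sum.cong refl)
    fix i assume "i \<in> I"
    hence "dim_vec (z i) = n" using z by auto
    thus "(\<Sum>b<n. f i * (A $$ (a, b) * z i $ b)) = f i * (A *\<^sub>v z i) $ a"
      using A a by (simp add: scalar_prod_def atLeast0LessThan row_def sum_distrib_left)
  qed
  finally show "(A *\<^sub>v vec n (\<lambda>a. \<Sum>i\<in>I. f i * z i $ a)) $ a = vec n (\<lambda>a. \<Sum>i\<in>I. f i * (A *\<^sub>v z i) $ a) $ a"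
    using a by simp
qed (use A in simp)

lemma hermitianD:
  assumes "hermitian A" "A \<in> carrier_mat n n" "i < n" "j < n"
  shows "A $$ (j, i) = cnj (A $$ (i, j))"
proof -
  have "dagger A $$ (j, i) = A $$ (j, i)" using assms unfolding hermitian_def by simp
  thus ?thesis using assms by (auto simp: dagger_def)
qed

lemma hermitianI:
  assumes "A \<in> carrier_mat n n" "\<And>i j. i < n \<Longrightarrow> j < n \<Longrightarrow> A $$ (j, i) = cnj (A $$ (i, j))"
  shows "hermitian A"
proof -
  have "dagger A = A"
  proof (rule eq_matI)
    fix i j assume "i < dim_row A" "j < dim_col A"
    thus "dagger A $$ (i, j) = A $$ (i, j)" using assms(1) assms(2)[of j i] by (auto simp: dagger_def)
  qed (use assms in \<open>auto simp: dagger_def\<close>)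
  thus ?thesis using assms unfolding hermitian_def by auto
qed

lemma hermitian_carrier_mat: "hermitian A \<Longrightarrow> A \<in> carrier_mat (dim_row A) (dim_row A)"
  unfolding hermitian_def by (intro carrier_matI) auto

lemma hermitian_add:
  assumes A: "A \<in> carrier_mat n n" and B: "B \<in> carrier_mat n n" and hA: "hermitian A" and hB: "hermitian B"
  shows "hermitian (A + B)"
proof (rule hermitianI)
  fix i j assume ij: "i < n" "j < n"
  have "A $$ (j, i) = cnj (A $$ (i, j))" "B $$ (j, i) = cnj (B $$ (i, j))"
    using hermitianD[OF hA A ij] hermitianD[OF hB B ij] by auto
  thus "(A + B) $$ (j, i) = cnj ((A + B) $$ (i, j))" using A B ij by simp
qed (use A B in simp)

lemma hermitian_minus:
  assumes A: "A \<in> carrier_mat n n" and B: "B \<in> carrier_mat n n" and hA: "hermitian A" and hB: "hermitian B"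
  shows "hermitian (A - B)"
proof (rule hermitianI)
  fix i j assume ij: "i < n" "j < n"
  have "A $$ (j, i) = cnj (A $$ (i, j))" "B $$ (j, i) = cnj (B $$ (i, j))"
    using hermitianD[OF hA A ij] hermitianD[OF hB B ij] by auto
  thus "(A - B) $$ (j, i) = cnj ((A - B) $$ (i, j))" using A B ij by simp
qed (use B in \<open>simp add: minus_carrier_mat\<close>)

lemma hermitian_smult_real:
  assumes A: "A \<in> carrier_mat n n" and hA: "hermitian A"
  shows "hermitian (complex_of_real c \<cdot>\<^sub>m A)"
proof (rule hermitianI)
  fix i j assume ij: "i < n" "j < n"
  have "A $$ (j, i) = cnj (A $$ (i, j))" using hermitianD[OF hA A ij] .
  thus "(complex_of_real c \<cdot>\<^sub>m A) $$ (j, i) = cnj ((complex_of_real c \<cdot>\<^sub>m A) $$ (i, j))" using A ij by simp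
qed (use A in simp)

lemma hermitian_braket_swap:
  assumes h: "hermitian A" and A: "A \<in> carrier_mat n n" and x: "x \<in> carrier_vec n" and y: "y \<in> carrier_vec n"
  shows "braket x (A *\<^sub>v y) = braket (A *\<^sub>v x) y"
proof -
  have "braket (A *\<^sub>v x) y = (\<Sum>j<n. cnj (\<Sum>i<n. A $$ (j, i) * x $ i) * y $ j)"
    using A x y by (auto simp: braket_def scalar_prod_def atLeast0LessThan row_def)
  also have "\<dots> = (\<Sum>j<n. \<Sum>i<n. cnj (A $$ (j, i)) * cnj (x $ i) * y $ j)"
    by (simp add: sum_distrib_right)
  also have "\<dots> = (\<Sum>j<n. \<Sum>i<n. cnj (x $ i) * A $$ (i, j) * y $ j)"
  proof (intro sum.cong refl)
    fix i j assume "i \<in> {..<n}" "j \<in> {..<n}"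
    hence "A $$ (j, i) = cnj (A $$ (i, j))" by (intro hermitianD[OF h A]) auto
    thus "cnj (A $$ (j, i)) * cnj (x $ i) * y $ j = cnj (x $ i) * A $$ (i, j) * y $ j" by simp
  qed
  also have "\<dots> = braket x (A *\<^sub>v y)"
    by (subst sum.swap) (simp add: braket_mult_mat_vec[OF A x y])
  finally show ?thesis ..
qed

lemma hermitian_braket_real:
  assumes h: "hermitian A" and A: "A \<in> carrier_mat n n" and x: "x \<in> carrier_vec n"
  shows "braket x (A *\<^sub>v x) = of_real (Re (braket x (A *\<^sub>v x)))"
proof -
  have "cnj (braket x (A *\<^sub>v x)) = braket (A *\<^sub>v x) x" using A x by (intro cnj_braket) auto
  also have "\<dots> = braket x (A *\<^sub>v x)" using hermitian_braket_swap[OF h A x x] by simp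
  finally have c: "cnj (braket x (A *\<^sub>v x)) = braket x (A *\<^sub>v x)" .
  have "Im (braket x (A *\<^sub>v x)) = 0" using arg_cong[OF c, of Im] by simp
  thus ?thesis by (simp add: complex_eq_iff)
qed

lemma psd_braket_real:
  assumes "psd A" "A \<in> carrier_mat n n" "x \<in> carrier_vec n"
  shows "braket x (A *\<^sub>v x) = of_real (Re (braket x (A *\<^sub>v x)))" "Re (braket x (A *\<^sub>v x)) \<ge> 0"
  using hermitian_braket_real[of A n x] assms unfolding psd_def by auto

section \<open>Weighted sums of projectors\<close>

text \<open>\<open>ketbra_sum\<close> is \<open>wsum_proj\<close> over an arbitrary index type, as needed for the product
  index sets of tensor products and partial traces.\<close>

definition ketbra_sum :: "nat \<Rightarrow> ('i \<Rightarrow> complex) \<Rightarrow> ('i \<Rightarrow> complex vec) \<Rightarrow> 'i set \<Rightarrow> complex mat" where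
  "ketbra_sum n c x S = mat n n (\<lambda>(a, b). \<Sum>k\<in>S. c k * (x k $ a * cnj (x k $ b)))"

lemma wsum_proj_eq_ketbra_sum: "wsum_proj = ketbra_sum"
  by (auto simp: fun_eq_iff wsum_proj_def ketbra_sum_def)

lemma ketbra_sum_carrier [simp]:
  "ketbra_sum n c x S \<in> carrier_mat n n" "dim_row (ketbra_sum n c x S) = n" "dim_col (ketbra_sum n c x S) = n"
  by (auto simp: ketbra_sum_def)

lemma ketbra_sum_index:
  "a < n \<Longrightarrow> b < n \<Longrightarrow> ketbra_sum n c x S $$ (a, b) = (\<Sum>k\<in>S. c k * (x k $ a * cnj (x k $ b)))"
  by (simp add: ketbra_sum_def)

lemma ketbra_sum_mult_vec:
  assumes x: "x ` S \<subseteq> carrier_vec n" and w: "w \<in> carrier_vec n"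
  shows "ketbra_sum n c x S *\<^sub>v w = vec n (\<lambda>a. \<Sum>k\<in>S. c k * braket (x k) w * x k $ a)"
proof (rule eq_vecI)
  fix a assume "a < dim_vec (vec n (\<lambda>a. \<Sum>k\<in>S. c k * braket (x k) w * x k $ a))"
  hence a: "a < n" by simp
  have "(ketbra_sum n c x S *\<^sub>v w) $ a = (\<Sum>b<n. (\<Sum>k\<in>S. c k * (x k $ a * cnj (x k $ b))) * w $ b)"
    using a w by (auto simp: ketbra_sum_def scalar_prod_def atLeast0LessThan row_def)
  also have "\<dots> = (\<Sum>k\<in>S. \<Sum>b<n. c k * (x k $ a * cnj (x k $ b)) * w $ b)"
    by (simp add: sum_distrib_right) (rule sum.swap)
  also have "\<dots> = (\<Sum>k\<in>S. c k * braket (x k) w * x k $ a)"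
  proof (rule sum.cong[OF refl])
    fix k assume "k \<in> S"
    hence "dim_vec (x k) = n" using x by auto
    thus "(\<Sum>b<n. c k * (x k $ a * cnj (x k $ b)) * w $ b) = c k * braket (x k) w * x k $ a"
      by (auto simp: braket_def sum_distrib_left sum_distrib_right mult_ac intro!: sum.cong)
  qed
  finally show "(ketbra_sum n c x S *\<^sub>v w) $ a = vec n (\<lambda>a. \<Sum>k\<in>S. c k * braket (x k) w * x k $ a) $ a"
    using a by simp
qed simp

lemma braket_ketbra_sum:
  assumes x: "x ` S \<subseteq> carrier_vec n" and w: "w \<in> carrier_vec n" and y: "y \<in> carrier_vec n"
  shows "braket y (ketbra_sum n c x S *\<^sub>v w) = (\<Sum>k\<in>S. c k * (cnj (braket (x k) y) * braket (x k) w))"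
proof -
  have "braket y (ketbra_sum n c x S *\<^sub>v w) = (\<Sum>k\<in>S. (c k * braket (x k) w) * braket y (x k))"
    unfolding ketbra_sum_mult_vec[OF x w] by (rule braket_vec_sum[OF y])
  also have "\<dots> = (\<Sum>k\<in>S. c k * (cnj (braket (x k) y) * braket (x k) w))"
    using x y by (auto simp: cnj_braket mult_ac carrier_vecD intro!: sum.cong)
  finally show ?thesis .
qed

lemma braket_ketbra_sum_self:
  assumes "x ` S \<subseteq> carrier_vec n" and "w \<in> carrier_vec n"
  shows "braket w (ketbra_sum n (\<lambda>k. of_real (r k)) x S *\<^sub>v w) = of_real (\<Sum>k\<in>S. r k * (cmod (braket (x k) w))\<^sup>2)"
proof -
  have "cnj z * z = of_real ((cmod z)\<^sup>2)" for z :: complex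
    by (simp add: complex_norm_square[symmetric] mult.commute del: of_real_power)
  thus ?thesis unfolding braket_ketbra_sum[OF assms assms(2)] by simp
qed

lemma dagger_ketbra_sum: "dagger (ketbra_sum n c x S) = ketbra_sum n (\<lambda>k. cnj (c k)) x S"
  by (auto simp: dagger_def ketbra_sum_def mult_ac intro!: eq_matI)

lemma hermitian_ketbra_sum: "hermitian (ketbra_sum n (\<lambda>k. of_real (r k)) x S)"
  unfolding hermitian_def dagger_ketbra_sum by simp

lemma psd_ketbra_sum:
  assumes x: "x ` S \<subseteq> carrier_vec n" and c: "\<And>k. k \<in> S \<Longrightarrow> c k = of_real (r k)"
    and r: "\<And>k. k \<in> S \<Longrightarrow> r k \<ge> 0"
  shows "psd (ketbra_sum n c x S)"
proof -
  have c_eq: "ketbra_sum n c x S = ketbra_sum n (\<lambda>k. of_real (r k)) x S"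
    using c by (auto simp: ketbra_sum_def intro!: eq_matI sum.cong)
  have "Re (braket w (ketbra_sum n (\<lambda>k. of_real (r k)) x S *\<^sub>v w)) \<ge> 0" if "w \<in> carrier_vec n" for w
    unfolding braket_ketbra_sum_self[OF x that] using r by (auto intro!: sum_nonneg)
  thus ?thesis unfolding psd_def c_eq using hermitian_ketbra_sum by auto
qed

lemma mtrace_ketbra_sum:
  assumes x: "x ` S \<subseteq> carrier_vec n"
  shows "mtrace (ketbra_sum n c x S) = (\<Sum>k\<in>S. c k * braket (x k) (x k))"
proof -
  have "mtrace (ketbra_sum n c x S) = (\<Sum>k\<in>S. \<Sum>i<n. c k * (x k $ i * cnj (x k $ i)))"
    by (simp add: mtrace_def ketbra_sum_def) (rule sum.swap)
  also have "\<dots> = (\<Sum>k\<in>S. c k * braket (x k) (x k))"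
    using x by (intro sum.cong refl) (auto simp: braket_def sum_distrib_left mult_ac)
  finally show ?thesis .
qed

lemma mtrace_ketbra_sum_mult:
  assumes x: "x ` S \<subseteq> carrier_vec n" and X: "X \<in> carrier_mat n n"
  shows "mtrace (ketbra_sum n c x S * X) = (\<Sum>k\<in>S. c k * braket (x k) (X *\<^sub>v x k))"
proof -
  have "mtrace (ketbra_sum n c x S * X) = (\<Sum>a<n. \<Sum>m<n. (\<Sum>k\<in>S. c k * (x k $ a * cnj (x k $ m))) * X $$ (m, a))"
    using X by (simp add: mtrace_def ketbra_sum_def scalar_prod_def atLeast0LessThan row_def col_def)
  also have "\<dots> = (\<Sum>a<n. \<Sum>m<n. \<Sum>k\<in>S. c k * (cnj (x k $ m) * X $$ (m, a) * x k $ a))"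
    unfolding sum_distrib_right by (intro sum.cong refl) (simp add: mult_ac)
  also have "\<dots> = (\<Sum>a<n. \<Sum>k\<in>S. \<Sum>m<n. c k * (cnj (x k $ m) * X $$ (m, a) * x k $ a))"
    by (rule sum.cong[OF refl], rule sum.swap)
  also have "\<dots> = (\<Sum>k\<in>S. \<Sum>a<n. \<Sum>m<n. c k * (cnj (x k $ m) * X $$ (m, a) * x k $ a))"
    by (rule sum.swap)
  also have "\<dots> = (\<Sum>k\<in>S. c k * (\<Sum>m<n. \<Sum>a<n. cnj (x k $ m) * X $$ (m, a) * x k $ a))"
    unfolding sum_distrib_left by (rule sum.cong[OF refl], rule sum.swap)
  also have "\<dots> = (\<Sum>k\<in>S. c k * braket (x k) (X *\<^sub>v x k))"
    using braket_mult_mat_vec[OF X] x by (intro sum.cong refl) auto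
  finally show ?thesis .
qed

definition mat_sum :: "nat \<Rightarrow> ('j \<Rightarrow> complex mat) \<Rightarrow> 'j set \<Rightarrow> complex mat" where
  "mat_sum n F J = mat n n (\<lambda>(a, b). \<Sum>j\<in>J. F j $$ (a, b))"

lemma mat_sum_carrier [simp]:
  "mat_sum n F J \<in> carrier_mat n n" "dim_row (mat_sum n F J) = n" "dim_col (mat_sum n F J) = n"
  by (simp_all add: mat_sum_def)

lemma hermitian_mat_sum:
  assumes "\<And>j. j \<in> J \<Longrightarrow> F j \<in> carrier_mat n n \<and> hermitian (F j)"
  shows "hermitian (mat_sum n F J)"
proof (rule hermitianI[OF mat_sum_carrier(1)])
  fix a b assume ab: "a < n" "b < n"
  have "F j $$ (b, a) = cnj (F j $$ (a, b))" if "j \<in> J" for j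
    using assms[OF that] hermitianD[of "F j" n a b] ab by blast
  thus "mat_sum n F J $$ (b, a) = cnj (mat_sum n F J $$ (a, b))"
    using ab by (simp add: mat_sum_def)
qed

lemma mat_sum_minus_convex:
  assumes c: "(\<Sum>j\<in>J. c j) = 1" and X: "\<And>j. j \<in> J \<Longrightarrow> X j \<in> carrier_mat n n" and Y: "Y \<in> carrier_mat n n"
  shows "mat_sum n (\<lambda>j. complex_of_real (c j) \<cdot>\<^sub>m X j) J - Y = mat_sum n (\<lambda>j. complex_of_real (c j) \<cdot>\<^sub>m (X j - Y)) J"
proof (rule eq_matI)
  fix a b assume "a < dim_row (mat_sum n (\<lambda>j. complex_of_real (c j) \<cdot>\<^sub>m (X j - Y)) J)"
    "b < dim_col (mat_sum n (\<lambda>j. complex_of_real (c j) \<cdot>\<^sub>m (X j - Y)) J)"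
  hence ab: "a < n" "b < n" by simp_all
  have "(\<Sum>j\<in>J. complex_of_real (c j) * (X j $$ (a, b) - Y $$ (a, b)))
      = (\<Sum>j\<in>J. complex_of_real (c j) * X j $$ (a, b)) - complex_of_real (\<Sum>j\<in>J. c j) * Y $$ (a, b)"
    by (simp add: right_diff_distrib sum_subtractf sum_distrib_right)
  moreover have "(complex_of_real (c j) \<cdot>\<^sub>m X j) $$ (a, b) = complex_of_real (c j) * X j $$ (a, b)"
    "(complex_of_real (c j) \<cdot>\<^sub>m (X j - Y)) $$ (a, b) = complex_of_real (c j) * (X j $$ (a, b) - Y $$ (a, b))"
    if "j \<in> J" for j
    using X[OF that] Y ab by auto
  ultimately show "(mat_sum n (\<lambda>j. complex_of_real (c j) \<cdot>\<^sub>m X j) J - Y) $$ (a, b)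
      = mat_sum n (\<lambda>j. complex_of_real (c j) \<cdot>\<^sub>m (X j - Y)) J $$ (a, b)"
    using ab Y c by (simp add: mat_sum_def)
qed (use Y in simp_all)

section \<open>Orthonormal bases\<close>

definition orthonormal :: "nat \<Rightarrow> (nat \<Rightarrow> complex vec) \<Rightarrow> bool" where
  "orthonormal n u \<longleftrightarrow> (\<forall>k<n. u k \<in> carrier_vec n) \<and>
     (\<forall>j<n. \<forall>k<n. braket (u j) (u k) = (if j = k then 1 else 0))"

lemma orthonormalD:
  "orthonormal n u \<Longrightarrow> k < n \<Longrightarrow> u k \<in> carrier_vec n"
  "orthonormal n u \<Longrightarrow> j < n \<Longrightarrow> k < n \<Longrightarrow> braket (u j) (u k) = (if j = k then 1 else 0)"
  unfolding orthonormal_def by auto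

lemma orthonormal_image_carrier: "orthonormal n u \<Longrightarrow> S \<subseteq> {..<n} \<Longrightarrow> u ` S \<subseteq> carrier_vec n"
  using orthonormalD(1) by blast

text \<open>An orthonormal family of \<open>n\<close> vectors in \<open>\<complex>\<^sup>n\<close> is complete: for the square
  matrix \<open>U\<close> with columns \<open>u k\<close>, \<open>U\<^sup>* U = 1\<close> forces \<open>U U\<^sup>* = 1\<close>.\<close>

lemma orthonormal_completeness:
  assumes on: "orthonormal n u" and ab: "a < n" "b < n"
  shows "(\<Sum>k<n. u k $ a * cnj (u k $ b)) = (if a = b then 1 else 0)"
proof -
  define U where "U = mat n n (\<lambda>(a, k). u k $ a)"
  define V where "V = mat n n (\<lambda>(k, a). cnj (u k $ a))"
  have U: "U \<in> carrier_mat n n" and V: "V \<in> carrier_mat n n" by (auto simp: U_def V_def)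
  have "V * U = 1\<^sub>m n"
  proof (rule eq_matI)
    fix i j assume ij: "i < dim_row (1\<^sub>m n)" "j < dim_col (1\<^sub>m n)"
    have "(V * U) $$ (i, j) = (\<Sum>a<n. cnj (u i $ a) * u j $ a)"
      using ij by (auto simp: U_def V_def scalar_prod_def atLeast0LessThan row_def col_def)
    also have "\<dots> = braket (u i) (u j)"
      using ij orthonormalD(1)[OF on, of i] by (auto simp: braket_def)
    finally show "(V * U) $$ (i, j) = 1\<^sub>m n $$ (i, j)"
      using ij orthonormalD(2)[OF on, of i j] by auto
  qed (auto simp: U_def V_def)
  hence "U * V = 1\<^sub>m n" using mat_mult_left_right_inverse[OF V U] by auto
  hence "(U * V) $$ (a, b) = (if a = b then 1 else 0)" using ab by auto
  moreover have "(U * V) $$ (a, b) = (\<Sum>k<n. u k $ a * cnj (u k $ b))"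
    using ab by (auto simp: U_def V_def scalar_prod_def atLeast0LessThan row_def col_def)
  ultimately show ?thesis by simp
qed

lemma orthonormal_expansion:
  assumes on: "orthonormal n u" and x: "x \<in> carrier_vec n" and a: "a < n"
  shows "(\<Sum>k<n. braket (u k) x * u k $ a) = x $ a"
proof -
  have "(\<Sum>k<n. braket (u k) x * u k $ a) = (\<Sum>k<n. \<Sum>b<n. x $ b * (u k $ a * cnj (u k $ b)))"
    using on x by (auto simp: braket_def sum_distrib_right orthonormal_def intro!: sum.cong)
  also have "\<dots> = (\<Sum>b<n. x $ b * (\<Sum>k<n. u k $ a * cnj (u k $ b)))"
    by (subst sum.swap) (simp add: sum_distrib_left)
  also have "\<dots> = (\<Sum>b<n. x $ b * (if a = b then 1 else 0))"
    using orthonormal_completeness[OF on a] by auto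
  also have "\<dots> = x $ a" using a by (simp add: if_distrib cong: if_cong)
  finally show ?thesis .
qed

lemma parseval:
  assumes on: "orthonormal n u" and x: "x \<in> carrier_vec n" and y: "y \<in> carrier_vec n"
  shows "(\<Sum>k<n. cnj (braket (u k) x) * braket (u k) y) = braket x y"
proof -
  have "(\<Sum>k<n. cnj (braket (u k) x) * braket (u k) y)
      = (\<Sum>k<n. \<Sum>b<n. \<Sum>a<n. cnj (x $ a) * y $ b * (u k $ a * cnj (u k $ b)))"
    using on x y by (auto simp: braket_def sum_distrib_right sum_distrib_left orthonormal_def
       intro!: sum.cong)
  also have "\<dots> = (\<Sum>b<n. \<Sum>a<n. \<Sum>k<n. cnj (x $ a) * y $ b * (u k $ a * cnj (u k $ b)))"
    by (subst sum.swap) (rule sum.cong[OF refl], rule sum.swap)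
  also have "\<dots> = (\<Sum>b<n. \<Sum>a<n. cnj (x $ a) * y $ b * (if a = b then 1 else 0))"
    using orthonormal_completeness[OF on] by (simp add: sum_distrib_left[symmetric])
  also have "\<dots> = braket x y" using x by (simp add: braket_def if_distrib cong: if_cong)
  finally show ?thesis .
qed

lemma mtrace_orthonormal:
  assumes on: "orthonormal n u" and X: "X \<in> carrier_mat n n"
  shows "(\<Sum>k<n. braket (u k) (X *\<^sub>v u k)) = mtrace X"
proof -
  have "(\<Sum>k<n. braket (u k) (X *\<^sub>v u k)) = mtrace (ketbra_sum n (\<lambda>_. 1) u {..<n} * X)"
    using mtrace_ketbra_sum_mult[OF orthonormal_image_carrier[OF on subset_refl] X] by simp
  also have "ketbra_sum n (\<lambda>_. 1) u {..<n} = 1\<^sub>m n"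
    using orthonormal_completeness[OF on] by (auto simp: ketbra_sum_def intro!: eq_matI)
  finally show ?thesis using X by simp
qed

lemma orthonormal_eq_matI:
  assumes on: "orthonormal n u" and A: "A \<in> carrier_mat n n" and B: "B \<in> carrier_mat n n"
    and AB: "\<And>k. k < n \<Longrightarrow> A *\<^sub>v u k = B *\<^sub>v u k"
  shows "A = B"
proof -
  have expand: "M $$ (a, b) = (\<Sum>k<n. (M *\<^sub>v u k) $ a * cnj (u k $ b))"
    if M: "M \<in> carrier_mat n n" and a: "a < n" and b: "b < n" for M a b
  proof -
    have uk: "k < n \<Longrightarrow> dim_vec (u k) = n" for k using orthonormalD(1)[OF on] by auto
    have "M $$ (a, b) = (\<Sum>m<n. M $$ (a, m) * (if m = b then 1 else 0))"
      using b by (simp add: if_distrib sum.delta cong: if_cong)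
    also have "\<dots> = (\<Sum>m<n. M $$ (a, m) * (\<Sum>k<n. u k $ m * cnj (u k $ b)))"
      using orthonormal_completeness[OF on _ b] by simp
    also have "\<dots> = (\<Sum>k<n. \<Sum>m<n. M $$ (a, m) * u k $ m * cnj (u k $ b))"
      by (simp add: sum_distrib_left mult_ac) (rule sum.swap)
    also have "\<dots> = (\<Sum>k<n. (M *\<^sub>v u k) $ a * cnj (u k $ b))"
      using M a uk by (auto simp: scalar_prod_def atLeast0LessThan row_def sum_distrib_right intro!: sum.cong)
    finally show ?thesis .
  qed
  show ?thesis
  proof (rule eq_matI)
    fix a b assume "a < dim_row B" "b < dim_col B"
    hence "a < n" "b < n" using B by auto
    thus "A $$ (a, b) = B $$ (a, b)" using AB by (simp add: expand[OF A] expand[OF B])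
  qed (use A B in auto)
qed

lemma ketbra_sum_orthonormal_mult_vec:
  assumes on: "orthonormal n u" and S: "S \<subseteq> {..<n}" and j: "j < n"
  shows "ketbra_sum n c u S *\<^sub>v u j = (if j \<in> S then c j else 0) \<cdot>\<^sub>v u j"
proof -
  have uj: "u j \<in> carrier_vec n" using orthonormalD(1)[OF on j] .
  have fin: "finite S" using S finite_subset by blast
  show ?thesis unfolding ketbra_sum_mult_vec[OF orthonormal_image_carrier[OF on S] uj]
  proof (rule eq_vecI)
    fix a assume "a < dim_vec ((if j \<in> S then c j else 0) \<cdot>\<^sub>v u j)"
    hence a: "a < n" using uj by simp
    have "(\<Sum>k\<in>S. c k * braket (u k) (u j) * u k $ a) = (\<Sum>k\<in>S. (c k * u k $ a) * (if k = j then 1 else 0))"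
      using orthonormalD(2)[OF on] S j by (auto intro!: sum.cong)
    also have "\<dots> = (if j \<in> S then c j * u j $ a else 0)"
      using fin by (simp add: if_distrib sum.delta cong: if_cong)
    finally show "vec n (\<lambda>a. \<Sum>k\<in>S. c k * braket (u k) (u j) * u k $ a) $ a = ((if j \<in> S then c j else 0) \<cdot>\<^sub>v u j) $ a"
      using a uj by simp
  qed (use uj in simp)
qed

lemma ketbra_sum_orthonormal_mult:
  assumes on: "orthonormal n u" and S: "S \<subseteq> {..<n}"
  shows "ketbra_sum n c u S * ketbra_sum n d u S = ketbra_sum n (\<lambda>k. c k * d k) u S"
proof (rule orthonormal_eq_matI[OF on])
  fix j assume j: "j < n"
  have uj: "u j \<in> carrier_vec n" using orthonormalD(1)[OF on j] .
  have "(ketbra_sum n c u S * ketbra_sum n d u S) *\<^sub>v u j = ketbra_sum n c u S *\<^sub>v (ketbra_sum n d u S *\<^sub>v u j)"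
    using uj by (intro assoc_mult_mat_vec) auto
  also have "\<dots> = ketbra_sum n (\<lambda>k. c k * d k) u S *\<^sub>v u j"
    unfolding ketbra_sum_orthonormal_mult_vec[OF on S j] using uj
    by (simp add: mult_mat_vec[of _ n n] ketbra_sum_orthonormal_mult_vec[OF on S j] smult_smult_assoc mult.commute)
  finally show "(ketbra_sum n c u S * ketbra_sum n d u S) *\<^sub>v u j = ketbra_sum n (\<lambda>k. c k * d k) u S *\<^sub>v u j" .
qed auto

lemma eigenbasis_ketbra_sum:
  assumes on: "orthonormal n u" and A: "A \<in> carrier_mat n n"
    and eig: "\<And>k. k < n \<Longrightarrow> A *\<^sub>v u k = d k \<cdot>\<^sub>v u k"
  shows "A = ketbra_sum n d u {..<n}"
  using A eig ketbra_sum_orthonormal_mult_vec[OF on subset_refl]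
  by (intro orthonormal_eq_matI[OF on]) auto

lemma eigenvector_braket:
  assumes on: "orthonormal n u" and k: "k < n" and eig: "A *\<^sub>v u k = c \<cdot>\<^sub>v u k"
  shows "braket (u k) (A *\<^sub>v u k) = c"
  using orthonormalD[OF on k] orthonormalD(2)[OF on k k] unfolding eig
  by (subst braket_smult_right) auto

lemma orthonormal_normalize:
  assumes w: "\<And>k. k < n \<Longrightarrow> w k \<in> carrier_vec n" and w0: "\<And>k. k < n \<Longrightarrow> w k \<noteq> 0\<^sub>v n"
    and orth: "\<And>j k. j < n \<Longrightarrow> k < n \<Longrightarrow> j \<noteq> k \<Longrightarrow> braket (w j) (w k) = 0"
  shows "orthonormal n (\<lambda>k. complex_of_real (1 / sqrt (Re (braket (w k) (w k)))) \<cdot>\<^sub>v w k)"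
proof -
  define r where "r k = Re (braket (w k) (w k))" for k
  have r: "braket (w k) (w k) = of_real (r k)" for k unfolding r_def braket_self by simp
  have rpos: "r k > 0" if k: "k < n" for k
  proof -
    have "r k \<noteq> 0" using braket_self_eq_0_iff[OF w[OF k]] w0[OF k] r[of k] by auto
    moreover have "r k \<ge> 0" unfolding r_def braket_self by (auto intro!: sum_nonneg)
    ultimately show ?thesis by auto
  qed
  show ?thesis
    unfolding orthonormal_def r_def[symmetric]
  proof (intro conjI allI impI)
    fix k assume "k < n" thus "complex_of_real (1 / sqrt (r k)) \<cdot>\<^sub>v w k \<in> carrier_vec n" using w by auto
  next
    fix j k assume j: "j < n" and k: "k < n"
    have "braket (complex_of_real (1 / sqrt (r j)) \<cdot>\<^sub>v w j) (complex_of_real (1 / sqrt (r k)) \<cdot>\<^sub>v w k)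
        = of_real (1 / sqrt (r j) * (1 / sqrt (r k))) * braket (w j) (w k)"
      unfolding braket_smult_left using w[OF j] w[OF k] by (subst braket_smult_right) auto
    also have "\<dots> = (if j = k then 1 else 0)"
      using orth[OF j k] r[of k] rpos[OF k] by (auto simp flip: of_real_mult simp: field_simps)
    finally show "braket (complex_of_real (1 / sqrt (r j)) \<cdot>\<^sub>v w j) (complex_of_real (1 / sqrt (r k)) \<cdot>\<^sub>v w k)
        = (if j = k then 1 else 0)" .
  qed
qed

lemma orthonormal_extend:
  assumes v: "v \<in> carrier_vec n" and v0: "v \<noteq> 0\<^sub>v n"
  obtains w c where "orthonormal n w" "w 0 = c \<cdot>\<^sub>v v"
proof -
  interpret cof_vec_space n "TYPE(complex)" .
  define b where "b = basis_completion v"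
  from basis_completion[OF v v0, folded b_def]
  have b: "set b \<subseteq> carrier_vec n" and dist: "distinct b" and ind: "\<not> lin_dep (set b)"
    and lb: "length b = n" and hb: "hd b = v" by auto
  have n: "n > 0" using v v0 by (cases n) auto
  define ws where "ws = gram_schmidt n b"
  from gram_schmidt_result[OF b dist ind ws_def]
  have orth: "corthogonal ws" and wsc: "set ws \<subseteq> carrier_vec n" and lws: "length ws = n"
    using lb by auto
  from n lb hb obtain vs where bv: "b = v # vs" by (cases b) auto
  have "hd ws = v" unfolding ws_def bv using gram_schmidt_hd[OF v] by simp
  hence ws0: "ws ! 0 = v" using n lws by (cases ws) auto
  have wsk: "k < n \<Longrightarrow> ws ! k \<in> carrier_vec n" for k using wsc lws by auto
  have nz: "ws ! k \<noteq> 0\<^sub>v n" if "k < n" for k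
    using corthogonalD[OF orth, of k k] that lws by auto
  have "braket (ws ! j) (ws ! k) = 0" if "j < n" "k < n" "j \<noteq> k" for j k
    using wsk that corthogonalD[OF orth, of k j] lws
    by (simp add: braket_def scalar_prod_def atLeast0LessThan mult.commute)
  hence "orthonormal n (\<lambda>k. complex_of_real (1 / sqrt (Re (braket (ws ! k) (ws ! k)))) \<cdot>\<^sub>v ws ! k)"
    using wsk nz by (intro orthonormal_normalize) auto
  thus thesis by (rule that) (simp add: ws0)
qed

section \<open>The spectral theorem for Hermitian matrices\<close>

text \<open>For an orthonormal basis \<open>w 0, \<dots>, w m\<close> whose first vector is an eigenvector of a
  hermitian \<open>A\<close>, the span of \<open>w 1, \<dots>, w m\<close> is \<open>A\<close>-invariant; \<open>tail_compression\<close> is the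
  matrix of \<open>A\<close> on this span in these coordinates, and \<open>tail_embedding\<close> maps
  coordinates back to vectors.\<close>

definition tail_compression :: "nat \<Rightarrow> complex mat \<Rightarrow> (nat \<Rightarrow> complex vec) \<Rightarrow> complex mat" where
  "tail_compression m A w = mat m m (\<lambda>(i, j). braket (w (Suc i)) (A *\<^sub>v w (Suc j)))"

definition tail_embedding :: "nat \<Rightarrow> (nat \<Rightarrow> complex vec) \<Rightarrow> complex vec \<Rightarrow> complex vec" where
  "tail_embedding n w y = vec n (\<lambda>a. \<Sum>i<dim_vec y. y $ i * w (Suc i) $ a)"

lemma hermitian_tail_compression:
  assumes h: "hermitian A" and A: "A \<in> carrier_mat (Suc m) (Suc m)" and on: "orthonormal (Suc m) w"
  shows "hermitian (tail_compression m A w)"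
proof (rule hermitianI)
  fix i j assume i: "i < m" and j: "j < m"
  have wi: "w (Suc i) \<in> carrier_vec (Suc m)" and wj: "w (Suc j) \<in> carrier_vec (Suc m)"
    using orthonormalD(1)[OF on] i j by auto
  have "braket (w (Suc j)) (A *\<^sub>v w (Suc i)) = cnj (braket (A *\<^sub>v w (Suc i)) (w (Suc j)))"
    using A wi wj by (subst cnj_braket) auto
  also have "braket (A *\<^sub>v w (Suc i)) (w (Suc j)) = braket (w (Suc i)) (A *\<^sub>v w (Suc j))"
    using hermitian_braket_swap[OF h A wi wj] by simp
  finally show "tail_compression m A w $$ (j, i) = cnj (tail_compression m A w $$ (i, j))"
    using i j by (simp add: tail_compression_def)
qed (simp add: tail_compression_def)

lemma tail_embedding_carrier: "tail_embedding n w y \<in> carrier_vec n"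
  by (simp add: tail_embedding_def)

lemma braket_tail_embedding:
  assumes on: "orthonormal (Suc m) w" and y: "y \<in> carrier_vec m" and l: "l < Suc m"
  shows "braket (w l) (tail_embedding (Suc m) w y) = (if l = 0 then 0 else y $ (l - 1))"
proof -
  have "braket (w l) (tail_embedding (Suc m) w y) = (\<Sum>i<m. y $ i * braket (w l) (w (Suc i)))"
    unfolding tail_embedding_def using y braket_vec_sum[OF orthonormalD(1)[OF on l]] by simp
  also have "\<dots> = (\<Sum>i<m. y $ i * (if l = Suc i then 1 else 0))"
    using orthonormalD(2)[OF on l] by (intro sum.cong refl) auto
  also have "\<dots> = (if l = 0 then 0 else y $ (l - 1))"
    using l by (cases l) (auto simp: if_distrib sum.delta cong: if_cong)
  finally show ?thesis .
qed

lemma braket_tail_embedding_self: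
  assumes on: "orthonormal (Suc m) w" and y: "y \<in> carrier_vec m" and z: "z \<in> carrier_vec m"
  shows "braket (tail_embedding (Suc m) w y) (tail_embedding (Suc m) w z) = braket y z"
proof -
  have "braket (tail_embedding (Suc m) w y) (tail_embedding (Suc m) w z)
      = (\<Sum>i<m. z $ i * braket (tail_embedding (Suc m) w y) (w (Suc i)))"
    unfolding tail_embedding_def[of _ _ z] using z braket_vec_sum[OF tail_embedding_carrier] by simp
  also have "\<dots> = (\<Sum>i<m. z $ i * cnj (y $ i))"
  proof (intro sum.cong refl)
    fix i assume i: "i \<in> {..<m}"
    have "braket (tail_embedding (Suc m) w y) (w (Suc i)) = cnj (braket (w (Suc i)) (tail_embedding (Suc m) w y))"
      using orthonormalD(1)[OF on, of "Suc i"] i by (subst cnj_braket) (auto simp: tail_embedding_def)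
    thus "z $ i * braket (tail_embedding (Suc m) w y) (w (Suc i)) = z $ i * cnj (y $ i)"
      using braket_tail_embedding[OF on y, of "Suc i"] i by simp
  qed
  also have "\<dots> = braket y z" using y z by (simp add: braket_def mult.commute)
  finally show ?thesis .
qed

lemma orthonormal_tail_extension:
  assumes on: "orthonormal (Suc m) w" and ony: "orthonormal m y"
  shows "orthonormal (Suc m) (\<lambda>k. case k of 0 \<Rightarrow> w 0 | Suc k \<Rightarrow> tail_embedding (Suc m) w (y k))"
    (is "orthonormal _ ?u")
  unfolding orthonormal_def
proof (intro conjI allI impI)
  fix k assume "k < Suc m" thus "?u k \<in> carrier_vec (Suc m)"
    using orthonormalD(1)[OF on] by (cases k) (auto simp: tail_embedding_carrier)
next
  fix j k assume j: "j < Suc m" and k: "k < Suc m"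
  have w0: "w 0 \<in> carrier_vec (Suc m)" using orthonormalD(1)[OF on] by simp
  have y: "i < m \<Longrightarrow> y i \<in> carrier_vec m" for i using orthonormalD(1)[OF ony] .
  have perp: "braket (w 0) (tail_embedding (Suc m) w (y i)) = 0" "braket (tail_embedding (Suc m) w (y i)) (w 0) = 0"
    if "i < m" for i
    using braket_tail_embedding[OF on y[OF that], of 0] cnj_braket[of "w 0" "tail_embedding (Suc m) w (y i)"]
      w0 tail_embedding_carrier[of "Suc m" w "y i"] by auto
  show "braket (?u j) (?u k) = (if j = k then 1 else 0)"
    using j k perp orthonormalD(2)[OF on, of 0 0] orthonormalD(2)[OF ony]
      braket_tail_embedding_self[OF on y y]
    by (cases j; cases k) auto
qed

lemma mult_tail_embedding:
  assumes h: "hermitian A" and A: "A \<in> carrier_mat (Suc m) (Suc m)" and on: "orthonormal (Suc m) w"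
    and eig: "A *\<^sub>v w 0 = e \<cdot>\<^sub>v w 0" and y: "y \<in> carrier_vec m"
  shows "A *\<^sub>v tail_embedding (Suc m) w y = tail_embedding (Suc m) w (tail_compression m A w *\<^sub>v y)"
proof -
  let ?C = "tail_compression m A w"
  have w: "k < Suc m \<Longrightarrow> w k \<in> carrier_vec (Suc m)" for k using orthonormalD(1)[OF on] .
  have Aw: "(A *\<^sub>v w (Suc i)) $ a = (\<Sum>l<m. ?C $$ (l, i) * w (Suc l) $ a)"
    if i: "i < m" and a: "a < Suc m" for i a
  proof -
    have "braket (w 0) (A *\<^sub>v w (Suc i)) = braket (A *\<^sub>v w 0) (w (Suc i))"
      using hermitian_braket_swap[OF h A w w] i by simp
    also have "\<dots> = 0"
      unfolding eig braket_smult_left using orthonormalD(2)[OF on, of 0 "Suc i"] i by simp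
    finally have w0_perp: "braket (w 0) (A *\<^sub>v w (Suc i)) = 0" .
    have "(A *\<^sub>v w (Suc i)) $ a = (\<Sum>l<Suc m. braket (w l) (A *\<^sub>v w (Suc i)) * w l $ a)"
      using orthonormal_expansion[OF on _ a, of "A *\<^sub>v w (Suc i)"] A w[of "Suc i"] i by simp
    also have "\<dots> = (\<Sum>l<m. braket (w (Suc l)) (A *\<^sub>v w (Suc i)) * w (Suc l) $ a)"
      unfolding sum.lessThan_Suc_shift w0_perp by simp
    finally show ?thesis using i by (simp add: tail_compression_def)
  qed
  show ?thesis
  proof (rule eq_vecI)
    fix a assume "a < dim_vec (tail_embedding (Suc m) w (?C *\<^sub>v y))"
    hence a: "a < Suc m" by (simp add: tail_embedding_def)
    have "(A *\<^sub>v tail_embedding (Suc m) w y) $ a = (\<Sum>i<m. y $ i * (A *\<^sub>v w (Suc i)) $ a)"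
      unfolding tail_embedding_def using y a w A by (subst mult_mat_vec_vec_sum[OF A]) auto
    also have "\<dots> = (\<Sum>i<m. \<Sum>l<m. y $ i * (?C $$ (l, i) * w (Suc l) $ a))"
      using Aw a by (simp add: sum_distrib_left)
    also have "\<dots> = (\<Sum>l<m. (\<Sum>i<m. ?C $$ (l, i) * y $ i) * w (Suc l) $ a)"
      by (subst sum.swap) (simp add: sum_distrib_right sum_distrib_left mult_ac)
    also have "\<dots> = tail_embedding (Suc m) w (?C *\<^sub>v y) $ a"
      using a y by (simp add: tail_embedding_def tail_compression_def scalar_prod_def atLeast0LessThan row_def)
    finally show "(A *\<^sub>v tail_embedding (Suc m) w y) $ a = tail_embedding (Suc m) w (?C *\<^sub>v y) $ a" .
  qed (use A in \<open>simp add: tail_embedding_def\<close>)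
qed

lemma hermitian_eigenvector_basis:
  assumes A: "A \<in> carrier_mat (Suc m) (Suc m)" and h: "hermitian A"
  obtains w e where "orthonormal (Suc m) w" "A *\<^sub>v w 0 = complex_of_real e \<cdot>\<^sub>v w 0"
proof -
  obtain e where "eigenvalue A e" using spectrum_non_empty[OF A] unfolding spectrum_def by auto
  then obtain v where "eigenvector A v e" unfolding eigenvalue_def by auto
  hence v: "v \<in> carrier_vec (Suc m)" and v0: "v \<noteq> 0\<^sub>v (Suc m)" and Av: "A *\<^sub>v v = e \<cdot>\<^sub>v v"
    unfolding eigenvector_def using A by auto
  obtain w c where on: "orthonormal (Suc m) w" and w0: "w 0 = c \<cdot>\<^sub>v v"
    using orthonormal_extend[OF v v0] .
  have w0c: "w 0 \<in> carrier_vec (Suc m)" using orthonormalD(1)[OF on] by simp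
  have Aw0: "A *\<^sub>v w 0 = e \<cdot>\<^sub>v w 0"
    unfolding w0 using A v Av by (simp add: mult_mat_vec smult_smult_assoc mult.commute)
  have "braket (w 0) (A *\<^sub>v w 0) = e"
    unfolding Aw0 using orthonormalD(2)[OF on, of 0 0] w0c by (subst braket_smult_right) auto
  hence "e = of_real (Re e)" using hermitian_braket_real[OF h A w0c] by simp
  thus thesis using that[OF on] Aw0 by metis
qed

theorem hermitian_eigenbasis:
  assumes "A \<in> carrier_mat n n" "hermitian A"
  shows "\<exists>u d. orthonormal n u \<and> (\<forall>k<n. A *\<^sub>v u k = complex_of_real (d k) \<cdot>\<^sub>v u k)"
  using assms
proof (induction n arbitrary: A)
  case 0
  then show ?case by (auto simp: orthonormal_def)
next
  case (Suc m)
  have A: "A \<in> carrier_mat (Suc m) (Suc m)" and h: "hermitian A" by fact+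
  obtain w e where on: "orthonormal (Suc m) w" and Aw0: "A *\<^sub>v w 0 = complex_of_real e \<cdot>\<^sub>v w 0"
    using hermitian_eigenvector_basis[OF A h] .
  obtain y d where ony: "orthonormal m y"
    and eigy: "\<forall>k<m. tail_compression m A w *\<^sub>v y k = complex_of_real (d k) \<cdot>\<^sub>v y k"
    using Suc.IH[OF _ hermitian_tail_compression[OF h A on]] by (auto simp: tail_compression_def)
  define u where "u k = (case k of 0 \<Rightarrow> w 0 | Suc k \<Rightarrow> tail_embedding (Suc m) w (y k))" for k
  define d' where "d' k = (case k of 0 \<Rightarrow> e | Suc k \<Rightarrow> d k)" for k
  have "orthonormal (Suc m) u" unfolding u_def by (rule orthonormal_tail_extension[OF on ony])
  moreover have "A *\<^sub>v u k = complex_of_real (d' k) \<cdot>\<^sub>v u k" if k: "k < Suc m" for k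
  proof (cases k)
    case 0 thus ?thesis using Aw0 by (simp add: u_def d'_def)
  next
    case (Suc k')
    hence k': "k' < m" using k by simp
    have y: "y k' \<in> carrier_vec m" using orthonormalD(1)[OF ony k'] .
    have "A *\<^sub>v u k = tail_embedding (Suc m) w (complex_of_real (d k') \<cdot>\<^sub>v y k')"
      unfolding Suc u_def using mult_tail_embedding[OF h A on Aw0 y] eigy k' by simp
    also have "\<dots> = complex_of_real (d' k) \<cdot>\<^sub>v u k"
      using y by (auto simp: Suc u_def d'_def tail_embedding_def sum_distrib_left mult_ac intro!: eq_vecI)
    finally show ?thesis .
  qed
  ultimately show ?case by blast
qed

lemma hermitian_spectral_decomposition:
  assumes A: "A \<in> carrier_mat n n" and h: "hermitian A"
  obtains u d where "orthonormal n u" "A = ketbra_sum n (\<lambda>k. complex_of_real (d k)) u {..<n}"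
    "\<And>k. k < n \<Longrightarrow> A *\<^sub>v u k = complex_of_real (d k) \<cdot>\<^sub>v u k"
proof -
  obtain u d where on: "orthonormal n u" and eig: "\<forall>k<n. A *\<^sub>v u k = complex_of_real (d k) \<cdot>\<^sub>v u k"
    using hermitian_eigenbasis[OF A h] by blast
  show thesis
    using that[OF on eigenbasis_ketbra_sum[OF on A]] eig by auto
qed

lemma psd_spectral_decomposition:
  assumes A: "A \<in> carrier_mat n n" and p: "psd A"
  obtains u d where "orthonormal n u" "A = ketbra_sum n (\<lambda>k. complex_of_real (d k)) u {..<n}"
    "\<And>k. k < n \<Longrightarrow> d k \<ge> 0"
proof -
  obtain u d where on: "orthonormal n u" and Ad: "A = ketbra_sum n (\<lambda>k. complex_of_real (d k)) u {..<n}"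
    and eig: "\<And>k. k < n \<Longrightarrow> A *\<^sub>v u k = complex_of_real (d k) \<cdot>\<^sub>v u k"
    using hermitian_spectral_decomposition[OF A] p unfolding psd_def by blast
  have "d k = Re (braket (u k) (A *\<^sub>v u k))" if "k < n" for k
    using eigenvector_braket[OF on that eig[OF that]] by simp
  also have "Re (braket (u k) (A *\<^sub>v u k)) \<ge> 0" if "k < n" for k
    using p orthonormalD(1)[OF on that] A unfolding psd_def by auto
  finally show thesis using that[OF on Ad] by auto
qed

section \<open>Positive square roots and the trace norm\<close>

lemma psd_mult_vec_eq_0:
  assumes B: "B \<in> carrier_mat n n" and p: "psd B" and w: "w \<in> carrier_vec n"
    and z: "braket w (B *\<^sub>v w) = 0"
  shows "B *\<^sub>v w = 0\<^sub>v n"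
proof -
  obtain u b where on: "orthonormal n u" and Bb: "B = ketbra_sum n (\<lambda>k. complex_of_real (b k)) u {..<n}"
    and b: "\<And>k. k < n \<Longrightarrow> b k \<ge> 0" using psd_spectral_decomposition[OF B p] by blast
  have u: "u ` {..<n} \<subseteq> carrier_vec n" using orthonormal_image_carrier[OF on] by simp
  have "(\<Sum>k<n. b k * (cmod (braket (u k) w))\<^sup>2) = 0"
    using z unfolding Bb braket_ketbra_sum_self[OF u w] by (simp only: of_real_eq_0_iff)
  hence "\<forall>k\<in>{..<n}. b k * (cmod (braket (u k) w))\<^sup>2 = 0"
    using b by (subst sum_nonneg_eq_0_iff[symmetric]) auto
  hence "k < n \<Longrightarrow> complex_of_real (b k) * braket (u k) w = 0" for k by auto
  thus ?thesis unfolding Bb ketbra_sum_mult_vec[OF u w] by (intro eq_vecI) (auto intro!: sum.neutral)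
qed

text \<open>The key step of the uniqueness of positive square roots: if \<open>B\<^sub>1\<^sup>2 = B\<^sub>2\<^sup>2\<close>, then
  \<open>D = B\<^sub>1 - B\<^sub>2\<close> satisfies \<open>B\<^sub>1 D + D B\<^sub>2 = 0\<close>, and this forces every eigenvalue of \<open>D\<close>
  to vanish.\<close>

lemma psd_anticommutator_eigenvalue:
  assumes B1: "B1 \<in> carrier_mat n n" and B2: "B2 \<in> carrier_mat n n" and p1: "psd B1" and p2: "psd B2"
    and D: "D \<in> carrier_mat n n" and hD: "hermitian D" and D_eq: "D = B1 - B2"
    and zero: "B1 * D + D * B2 = 0\<^sub>m n n"
    and w: "w \<in> carrier_vec n" and w1: "braket w w = 1" and eig: "D *\<^sub>v w = complex_of_real e \<cdot>\<^sub>v w"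
  shows "e = 0"
proof (rule ccontr)
  assume ne: "e \<noteq> 0"
  have "(B1 * D + D * B2) *\<^sub>v w = 0\<^sub>v n"
    unfolding zero using w by (intro eq_vecI) (auto simp: scalar_prod_def)
  hence "0 = braket w ((B1 * D + D * B2) *\<^sub>v w)"
    using w braket_zero_right[of w] by simp
  also have "(B1 * D + D * B2) *\<^sub>v w = complex_of_real e \<cdot>\<^sub>v (B1 *\<^sub>v w) + D *\<^sub>v (B2 *\<^sub>v w)"
    using B1 B2 D w eig by (simp add: add_mult_distrib_mat_vec[of _ n n] mult_mat_vec[of _ n n])
  also have "braket w \<dots> = braket w (complex_of_real e \<cdot>\<^sub>v (B1 *\<^sub>v w)) + braket w (D *\<^sub>v (B2 *\<^sub>v w))"
    using B1 B2 D w by (intro braket_add_right) auto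
  also have "braket w (D *\<^sub>v (B2 *\<^sub>v w)) = complex_of_real e * braket w (B2 *\<^sub>v w)"
    using hermitian_braket_swap[OF hD D w, of "B2 *\<^sub>v w"] B2 w by (simp add: eig braket_smult_left)
  also have "braket w (complex_of_real e \<cdot>\<^sub>v (B1 *\<^sub>v w)) = complex_of_real e * braket w (B1 *\<^sub>v w)"
    using B1 w by (intro braket_smult_right) auto
  finally have s0: "braket w (B1 *\<^sub>v w) + braket w (B2 *\<^sub>v w) = 0"
    using ne by (simp add: distrib_left[symmetric])
  have "Re (braket w (B1 *\<^sub>v w)) + Re (braket w (B2 *\<^sub>v w)) = 0"
    using arg_cong[OF s0, of Re] by (simp only: plus_complex.sel zero_complex.sel)
  hence "Re (braket w (B1 *\<^sub>v w)) = 0" "Re (braket w (B2 *\<^sub>v w)) = 0"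
    using psd_braket_real(2)[OF p1 B1 w] psd_braket_real(2)[OF p2 B2 w] by linarith+
  hence "braket w (B1 *\<^sub>v w) = 0" "braket w (B2 *\<^sub>v w) = 0"
    using psd_braket_real(1)[OF p1 B1 w] psd_braket_real(1)[OF p2 B2 w] by auto
  hence "D *\<^sub>v w = 0\<^sub>v n"
    unfolding D_eq using B1 B2 w psd_mult_vec_eq_0[OF B1 p1 w] psd_mult_vec_eq_0[OF B2 p2 w]
    by (simp add: minus_mult_distrib_mat_vec)
  hence "braket w (D *\<^sub>v w) = 0" using w braket_zero_right[of w] by simp
  moreover have "braket w (D *\<^sub>v w) = complex_of_real e"
    unfolding eig using w w1 by (subst braket_smult_right) auto
  ultimately show False using ne by simp
qed

lemma psd_sqrt_unique:
  assumes B1: "B1 \<in> carrier_mat n n" and B2: "B2 \<in> carrier_mat n n" and p1: "psd B1" and p2: "psd B2"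
    and eq: "B1 * B1 = B2 * B2"
  shows "B1 = B2"
proof -
  define D where "D = B1 - B2"
  have D: "D \<in> carrier_mat n n" using B1 B2 unfolding D_def by auto
  have "hermitian (B1 + complex_of_real (-1) \<cdot>\<^sub>m B2)"
    using B1 B2 p1 p2 unfolding psd_def by (intro hermitian_add[of _ n] hermitian_smult_real) auto
  moreover have "B1 + complex_of_real (-1) \<cdot>\<^sub>m B2 = D"
    unfolding D_def using B1 B2 by (intro eq_matI) auto
  ultimately have hD: "hermitian D" by simp
  have zero: "B1 * D + D * B2 = 0\<^sub>m n n"
  proof -
    have "B1 * D + D * B2 = (B1 * B1 - B1 * B2) + (B1 * B2 - B2 * B2)"
      unfolding D_def using B1 B2 by (simp add: mult_minus_distrib_mat minus_mult_distrib_mat)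
    also have "\<dots> = 0\<^sub>m n n" using eq B1 B2 by (intro eq_matI) auto
    finally show ?thesis .
  qed
  obtain w e where on: "orthonormal n w" and De: "D = ketbra_sum n (\<lambda>k. complex_of_real (e k)) w {..<n}"
    and eig: "\<And>k. k < n \<Longrightarrow> D *\<^sub>v w k = complex_of_real (e k) \<cdot>\<^sub>v w k"
    using hermitian_spectral_decomposition[OF D hD] by blast
  have "e k = 0" if "k < n" for k
    using psd_anticommutator_eigenvalue[OF B1 B2 p1 p2 D hD D_def zero orthonormalD(1)[OF on that]
        _ eig[OF that]] orthonormalD(2)[OF on that that] by simp
  hence D0: "D = 0\<^sub>m n n" unfolding De by (intro eq_matI) (auto simp: ketbra_sum_def)
  show ?thesis
  proof (rule eq_matI)
    fix i j assume "i < dim_row B2" "j < dim_col B2"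
    hence "i < n" "j < n" using B2 by auto
    moreover have "D $$ (i, j) = 0" using D0 \<open>i < n\<close> \<open>j < n\<close> by simp
    ultimately show "B1 $$ (i, j) = B2 $$ (i, j)" using B1 B2 by (simp add: D_def)
  qed (use B1 B2 in auto)
qed

lemma mat_abs_eq:
  assumes B: "B \<in> carrier_mat n n" and p: "psd B" and sq: "B * B = dagger A * A"
  shows "mat_abs A = B"
  unfolding mat_abs_def
proof (rule the_equality)
  fix B' assume B': "psd B' \<and> B' * B' = dagger A * A"
  hence "dim_row (B' * B') = dim_row (B * B)" using sq by simp
  hence "dim_row B' = n" using B by simp
  hence "B' \<in> carrier_mat n n" using B' unfolding psd_def using hermitian_carrier_mat by metis
  thus "B' = B" using psd_sqrt_unique[OF _ B] B' p sq by simp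
qed (use p sq in simp)

lemma trace_norm_psd:
  assumes "P \<in> carrier_mat n n" and p: "psd P"
  shows "trace_norm P = Re (mtrace P)"
proof -
  have "dagger P = P" using p unfolding psd_def hermitian_def by simp
  hence "mat_abs P = P" using mat_abs_eq[OF assms] by simp
  thus ?thesis unfolding trace_norm_def by simp
qed

lemma trace_norm_ketbra_sum:
  assumes on: "orthonormal n u"
  shows "trace_norm (ketbra_sum n (\<lambda>k. complex_of_real (d k)) u {..<n}) = (\<Sum>k<n. \<bar>d k\<bar>)"
proof -
  let ?A = "ketbra_sum n (\<lambda>k. complex_of_real (d k)) u {..<n}"
  define B where "B = ketbra_sum n (\<lambda>k. complex_of_real \<bar>d k\<bar>) u {..<n}"
  have u: "u ` {..<n} \<subseteq> carrier_vec n" using orthonormal_image_carrier[OF on] by simp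
  have p: "psd B" unfolding B_def by (rule psd_ketbra_sum[OF u]) auto
  have sq: "complex_of_real \<bar>d k\<bar> * complex_of_real \<bar>d k\<bar> = cnj (complex_of_real (d k)) * complex_of_real (d k)" for k
    by (simp only: complex_cnj_complex_of_real of_real_mult[symmetric] abs_mult_self_eq)
  have "B * B = dagger ?A * ?A"
    unfolding B_def dagger_ketbra_sum ketbra_sum_orthonormal_mult[OF on subset_refl] sq ..
  hence "mat_abs ?A = B" by (intro mat_abs_eq[OF _ p, of n]) (simp add: B_def)
  hence "trace_norm ?A = Re (mtrace B)" unfolding trace_norm_def by simp
  also have "mtrace B = (\<Sum>k<n. complex_of_real \<bar>d k\<bar>)"
    unfolding B_def mtrace_ketbra_sum[OF u] using orthonormalD(2)[OF on] by simp
  finally show ?thesis by simp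
qed

text \<open>In an eigenbasis \<open>w\<close> of \<open>X\<close> with eigenvalues \<open>e\<close>, the weights \<open>\<bar>\<langle>w l|u k\<rangle>\<bar>\<^sup>2\<close> form a
  doubly stochastic matrix by Parseval, so a signed sum of diagonal entries in the basis \<open>u\<close> is at most
  \<open>\<Sum>\<bar>e l\<bar>\<close>, the trace norm.\<close>

lemma trace_norm_ge_diagonal:
  assumes X: "X \<in> carrier_mat n n" and h: "hermitian X" and on: "orthonormal n u"
    and s: "\<And>k. k < n \<Longrightarrow> \<bar>s k\<bar> \<le> 1"
  shows "(\<Sum>k<n. s k * Re (braket (u k) (X *\<^sub>v u k))) \<le> trace_norm X"
proof -
  obtain w e where onw: "orthonormal n w" and Xe: "X = ketbra_sum n (\<lambda>k. complex_of_real (e k)) w {..<n}"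
    using hermitian_spectral_decomposition[OF X h] by blast
  define c where "c l k = (cmod (braket (w l) (u k)))\<^sup>2" for l k
  have w: "w ` {..<n} \<subseteq> carrier_vec n" using orthonormal_image_carrier[OF onw] by simp
  have diag: "Re (braket (u k) (X *\<^sub>v u k)) = (\<Sum>l<n. e l * c l k)" if k: "k < n" for k
    unfolding Xe braket_ketbra_sum_self[OF w orthonormalD(1)[OF on k]] c_def by simp
  have c_sum: "(\<Sum>k<n. c l k) = 1" if l: "l < n" for l
  proof -
    have wl: "w l \<in> carrier_vec n" using orthonormalD(1)[OF onw l] .
    have "cnj (braket (u k) (w l)) * braket (u k) (w l) = of_real (c l k)" if k: "k < n" for k
    proof -
      have "cmod (braket (u k) (w l)) = cmod (braket (w l) (u k))"
        using cnj_braket[of "w l" "u k"] orthonormalD(1)[OF on k] wl by (metis carrier_vecD complex_mod_cnj)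
      thus ?thesis unfolding c_def by (simp add: complex_norm_square[symmetric] mult.commute del: of_real_power)
    qed
    hence "complex_of_real (\<Sum>k<n. c l k) = 1"
      using parseval[OF on wl wl] orthonormalD(2)[OF onw l l] by simp
    thus ?thesis by (simp only: of_real_eq_1_iff)
  qed
  have "(\<Sum>k<n. s k * Re (braket (u k) (X *\<^sub>v u k))) = (\<Sum>k<n. \<Sum>l<n. s k * e l * c l k)"
    using diag by (simp add: sum_distrib_left mult.assoc)
  also have "\<dots> \<le> (\<Sum>k<n. \<Sum>l<n. \<bar>e l\<bar> * c l k)"
  proof (intro sum_mono)
    fix k l assume k: "k \<in> {..<n}" and l: "l \<in> {..<n}"
    have "s k * e l \<le> \<bar>s k\<bar> * \<bar>e l\<bar>" by (metis abs_ge_self abs_mult)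
    also have "\<dots> \<le> \<bar>e l\<bar>" using s[of k] k by (intro mult_left_le_one_le) auto
    finally have "s k * e l \<le> \<bar>e l\<bar>" .
    thus "s k * e l * c l k \<le> \<bar>e l\<bar> * c l k" unfolding c_def by (intro mult_right_mono) auto
  qed
  also have "\<dots> = (\<Sum>l<n. \<bar>e l\<bar> * (\<Sum>k<n. c l k))" by (subst sum.swap) (simp add: sum_distrib_left)
  also have "\<dots> = trace_norm X" using c_sum trace_norm_ketbra_sum[OF onw] Xe by simp
  finally show ?thesis .
qed

lemma trace_norm_triangle:
  assumes X: "X \<in> carrier_mat n n" and Y: "Y \<in> carrier_mat n n" and hX: "hermitian X" and hY: "hermitian Y"
  shows "trace_norm (X + Y) \<le> trace_norm X + trace_norm Y"
proof -
  have "X + Y \<in> carrier_mat n n" using X Y by simp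
  obtain u d where on: "orthonormal n u" and XY: "X + Y = ketbra_sum n (\<lambda>k. complex_of_real (d k)) u {..<n}"
    and eig: "\<And>k. k < n \<Longrightarrow> (X + Y) *\<^sub>v u k = complex_of_real (d k) \<cdot>\<^sub>v u k"
    using hermitian_spectral_decomposition[OF _ hermitian_add[OF X Y hX hY]] \<open>X + Y \<in> carrier_mat n n\<close> by blast
  have d: "d k = Re (braket (u k) (X *\<^sub>v u k)) + Re (braket (u k) (Y *\<^sub>v u k))" if k: "k < n" for k
  proof -
    have uk: "u k \<in> carrier_vec n" using orthonormalD(1)[OF on k] .
    have "complex_of_real (d k) = braket (u k) ((X + Y) *\<^sub>v u k)"
      using eigenvector_braket[OF on k eig[OF k]] by simp
    also have "\<dots> = braket (u k) (X *\<^sub>v u k) + braket (u k) (Y *\<^sub>v u k)"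
      using X Y uk by (simp add: add_mult_distrib_mat_vec braket_add_right)
    finally have "complex_of_real (d k) = braket (u k) (X *\<^sub>v u k) + braket (u k) (Y *\<^sub>v u k)" .
    from arg_cong[OF this, of Re] show ?thesis by simp
  qed
  have "trace_norm (X + Y) = (\<Sum>k<n. sgn (d k) * d k)"
    unfolding XY trace_norm_ketbra_sum[OF on] by (simp add: abs_sgn mult.commute)
  also have "\<dots> = (\<Sum>k<n. sgn (d k) * Re (braket (u k) (X *\<^sub>v u k)) + sgn (d k) * Re (braket (u k) (Y *\<^sub>v u k)))"
    by (intro sum.cong refl) (simp add: d distrib_left)
  also have "\<dots> = (\<Sum>k<n. sgn (d k) * Re (braket (u k) (X *\<^sub>v u k))) + (\<Sum>k<n. sgn (d k) * Re (braket (u k) (Y *\<^sub>v u k)))"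
    by (rule sum.distrib)
  also have "\<dots> \<le> trace_norm X + trace_norm Y"
    by (intro add_mono trace_norm_ge_diagonal[OF X hX on] trace_norm_ge_diagonal[OF Y hY on])
      (simp_all add: abs_sgn_eq)
  finally show ?thesis .
qed

lemma trace_norm_smult_real:
  assumes X: "X \<in> carrier_mat n n" and hX: "hermitian X"
  shows "trace_norm (complex_of_real c \<cdot>\<^sub>m X) = \<bar>c\<bar> * trace_norm X"
proof -
  obtain w e where onw: "orthonormal n w" and Xe: "X = ketbra_sum n (\<lambda>k. complex_of_real (e k)) w {..<n}"
    using hermitian_spectral_decomposition[OF X hX] by blast
  have "complex_of_real c \<cdot>\<^sub>m X = ketbra_sum n (\<lambda>k. complex_of_real (c * e k)) w {..<n}"
    unfolding Xe by (auto simp: ketbra_sum_def sum_distrib_left mult_ac intro!: eq_matI)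
  hence "trace_norm (complex_of_real c \<cdot>\<^sub>m X) = (\<Sum>k<n. \<bar>c * e k\<bar>)"
    by (simp only: trace_norm_ketbra_sum[OF onw])
  also have "\<dots> = \<bar>c\<bar> * (\<Sum>k<n. \<bar>e k\<bar>)" by (simp add: abs_mult sum_distrib_left)
  also have "(\<Sum>k<n. \<bar>e k\<bar>) = trace_norm X" unfolding Xe trace_norm_ketbra_sum[OF onw] ..
  finally show ?thesis .
qed

lemma trace_norm_minus_le:
  assumes A: "A \<in> carrier_mat n n" and B: "B \<in> carrier_mat n n" and hA: "hermitian A" and hB: "hermitian B"
  shows "trace_norm (A - B) \<le> trace_norm A + trace_norm B"
proof -
  have eq: "A - B = A + complex_of_real (-1) \<cdot>\<^sub>m B" using A B by (intro eq_matI) auto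
  have "trace_norm (A + complex_of_real (-1) \<cdot>\<^sub>m B) \<le> trace_norm A + trace_norm (complex_of_real (-1) \<cdot>\<^sub>m B)"
    using B by (intro trace_norm_triangle[OF A _ hA hermitian_smult_real[OF B hB]]) simp
  thus ?thesis unfolding eq using trace_norm_smult_real[OF B hB, of "-1"] by simp
qed

lemma trace_norm_zero_mat: "trace_norm (0\<^sub>m n n) = 0"
proof -
  have zero: "0\<^sub>m n n = ketbra_sum n (\<lambda>_. 0) (\<lambda>_. 0\<^sub>v n) ({} :: nat set)"
    by (intro eq_matI) (auto simp: ketbra_sum_def)
  have "psd (ketbra_sum n (\<lambda>_. 0) (\<lambda>_. 0\<^sub>v n) ({} :: nat set))"
    by (rule psd_ketbra_sum[of _ _ _ _ "\<lambda>_. 0"]) auto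
  hence "trace_norm (ketbra_sum n (\<lambda>_. 0) (\<lambda>_. 0\<^sub>v n) ({} :: nat set)) = 0"
    by (subst trace_norm_psd[of _ n]) (auto simp: mtrace_ketbra_sum)
  thus ?thesis unfolding zero .
qed

lemma trace_norm_mat_sum:
  assumes "finite J" and "\<And>j. j \<in> J \<Longrightarrow> X j \<in> carrier_mat n n \<and> hermitian (X j)"
  shows "trace_norm (mat_sum n (\<lambda>j. complex_of_real (c j) \<cdot>\<^sub>m X j) J) \<le> (\<Sum>j\<in>J. \<bar>c j\<bar> * trace_norm (X j))"
  using assms
proof (induction J rule: finite_induct)
  case empty
  have "mat_sum n (\<lambda>j. complex_of_real (c j) \<cdot>\<^sub>m X j) {} = 0\<^sub>m n n"
    by (intro eq_matI) (auto simp: mat_sum_def)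
  thus ?case by (simp add: trace_norm_zero_mat)
next
  case (insert i J)
  define F where "F j = complex_of_real (c j) \<cdot>\<^sub>m X j" for j
  have Xi: "X i \<in> carrier_mat n n" "hermitian (X i)" using insert.prems by auto
  have Fi: "F i \<in> carrier_mat n n" "hermitian (F i)" unfolding F_def using Xi hermitian_smult_real by auto
  have hJ: "hermitian (mat_sum n F J)"
    using insert.prems hermitian_smult_real unfolding F_def by (intro hermitian_mat_sum) auto
  have IH: "trace_norm (mat_sum n F J) \<le> (\<Sum>j\<in>J. \<bar>c j\<bar> * trace_norm (X j))"
    unfolding F_def using insert.IH insert.prems by blast
  have "mat_sum n F (insert i J) = F i + mat_sum n F J"
    using insert(1,2) Fi by (intro eq_matI) (auto simp: mat_sum_def)
  hence "trace_norm (mat_sum n F (insert i J)) \<le> trace_norm (F i) + trace_norm (mat_sum n F J)"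
    using trace_norm_triangle[OF Fi(1) mat_sum_carrier(1) Fi(2) hJ] by simp
  also have "\<dots> \<le> \<bar>c i\<bar> * trace_norm (X i) + (\<Sum>j\<in>J. \<bar>c j\<bar> * trace_norm (X j))"
    using IH trace_norm_smult_real[OF Xi] unfolding F_def by simp
  also have "\<dots> = (\<Sum>j\<in>insert i J. \<bar>c j\<bar> * trace_norm (X j))"
    using insert(1,2) by simp
  finally show ?case unfolding F_def .
qed

section \<open>Tensor products and partial traces\<close>

lemma sum_lessThan_mult_nat:
  fixes f :: "nat \<Rightarrow> 'a::comm_monoid_add"
  shows "(\<Sum>i<m * n. f i) = (\<Sum>a<m. \<Sum>b<n. f (a * n + b))"
proof -
  have "(\<Sum>b<n. f (a * n + b)) = (\<Sum>i\<in>{a * n..<a * n + n}. f i)" for a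
    using sum.shift_bounds_nat_ivl[of f 0 "a * n" n] by (simp add: atLeast0LessThan add.commute)
  thus ?thesis by (simp add: sum.nat_group)
qed

lemma mult_add_less_mult_nat: "a < m \<Longrightarrow> b < n \<Longrightarrow> a * n + b < m * (n::nat)"
proof -
  assume "a < m" "b < n"
  hence "a * n + b < Suc a * n" by simp
  also have "\<dots> \<le> m * n" using \<open>a < m\<close> by (intro mult_right_mono) auto
  finally show ?thesis .
qed

lemma mtrace_kron:
  assumes A: "A \<in> carrier_mat m m" and B: "B \<in> carrier_mat n n" and n: "n > 0"
  shows "mtrace (kron A B) = mtrace A * mtrace B"
proof -
  have "mtrace (kron A B) = (\<Sum>i<m * n. A $$ (i div n, i div n) * B $$ (i mod n, i mod n))"
    using A B by (simp add: mtrace_def kron_def)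
  also have "\<dots> = (\<Sum>a<m. \<Sum>b<n. A $$ (a, a) * B $$ (b, b))"
    unfolding sum_lessThan_mult_nat using n by (intro sum.cong refl) simp
  also have "\<dots> = mtrace A * mtrace B" using A B by (simp add: mtrace_def sum_product)
  finally show ?thesis .
qed

lemma kron_ketbra_sum:
  assumes dB: "dB > 0"
  shows "kron (ketbra_sum dS c x S) (ketbra_sum dB c' x' S') =
    ketbra_sum (dS * dB) (\<lambda>(i, k). c i * c' k)
      (\<lambda>(i, k). vec (dS * dB) (\<lambda>I. x i $ (I div dB) * x' k $ (I mod dB))) (S \<times> S')"
proof (rule eq_matI)
  fix I J assume "I < dim_row (ketbra_sum (dS * dB) (\<lambda>(i, k). c i * c' k)
      (\<lambda>(i, k). vec (dS * dB) (\<lambda>I. x i $ (I div dB) * x' k $ (I mod dB))) (S \<times> S'))"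
    "J < dim_col (ketbra_sum (dS * dB) (\<lambda>(i, k). c i * c' k)
      (\<lambda>(i, k). vec (dS * dB) (\<lambda>I. x i $ (I div dB) * x' k $ (I mod dB))) (S \<times> S'))"
  hence IJ: "I < dS * dB" "J < dS * dB" by auto
  have d: "I div dB < dS" "J div dB < dS" using IJ by (simp_all add: less_mult_imp_div_less)
  have m: "I mod dB < dB" "J mod dB < dB" using dB by auto
  have "kron (ketbra_sum dS c x S) (ketbra_sum dB c' x' S') $$ (I, J)
     = (\<Sum>i\<in>S. c i * (x i $ (I div dB) * cnj (x i $ (J div dB)))) *
       (\<Sum>k\<in>S'. c' k * (x' k $ (I mod dB) * cnj (x' k $ (J mod dB))))"
    using IJ d m by (simp add: kron_def ketbra_sum_def)
  also have "\<dots> = (\<Sum>(i, k)\<in>S \<times> S'. c i * c' k *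
      ((x i $ (I div dB) * x' k $ (I mod dB)) * cnj (x i $ (J div dB) * x' k $ (J mod dB))))"
    unfolding sum_product sum.cartesian_product[symmetric] by (intro sum.cong refl) (simp add: mult_ac)
  also have "\<dots> = ketbra_sum (dS * dB) (\<lambda>(i, k). c i * c' k)
      (\<lambda>(i, k). vec (dS * dB) (\<lambda>I. x i $ (I div dB) * x' k $ (I mod dB))) (S \<times> S') $$ (I, J)"
    using IJ by (simp add: ketbra_sum_def case_prod_beta)
  finally show "kron (ketbra_sum dS c x S) (ketbra_sum dB c' x' S') $$ (I, J) = \<dots>" .
qed (auto simp: kron_def)

lemma ptrace_B_carrier:
  "dB > 0 \<Longrightarrow> X \<in> carrier_mat (dS * dB) (dS * dB) \<Longrightarrow> ptrace_B dB X \<in> carrier_mat dS dS"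
  by (simp add: ptrace_B_def)

lemma ptrace_B_index:
  "dB > 0 \<Longrightarrow> X \<in> carrier_mat (dS * dB) (dS * dB) \<Longrightarrow> a < dS \<Longrightarrow> a' < dS \<Longrightarrow>
    ptrace_B dB X $$ (a, a') = (\<Sum>b<dB. X $$ (a * dB + b, a' * dB + b))"
  by (simp add: ptrace_B_def)

lemma mtrace_ptrace_B:
  assumes dB: "dB > 0" and X: "X \<in> carrier_mat (dS * dB) (dS * dB)"
  shows "mtrace (ptrace_B dB X) = mtrace X"
  using dB X by (simp add: mtrace_def ptrace_B_def sum_lessThan_mult_nat)

lemma ptrace_B_ketbra_sum:
  assumes dB: "dB > 0"
  shows "ptrace_B dB (ketbra_sum (dS * dB) c x S) =
    ketbra_sum dS (\<lambda>(k, b). c k) (\<lambda>(k, b). vec dS (\<lambda>a. x k $ (a * dB + b))) (S \<times> {..<dB})"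
proof (rule eq_matI)
  fix a a' assume "a < dim_row (ketbra_sum dS (\<lambda>(k, b). c k) (\<lambda>(k, b). vec dS (\<lambda>a. x k $ (a * dB + b))) (S \<times> {..<dB}))"
    "a' < dim_col (ketbra_sum dS (\<lambda>(k, b). c k) (\<lambda>(k, b). vec dS (\<lambda>a. x k $ (a * dB + b))) (S \<times> {..<dB}))"
  hence a: "a < dS" "a' < dS" by auto
  have "ptrace_B dB (ketbra_sum (dS * dB) c x S) $$ (a, a')
      = (\<Sum>b<dB. \<Sum>k\<in>S. c k * (x k $ (a * dB + b) * cnj (x k $ (a' * dB + b))))"
    using dB a mult_add_less_mult_nat[OF a(1)] mult_add_less_mult_nat[OF a(2)]
    by (simp add: ptrace_B_def ketbra_sum_def)
  also have "\<dots> = (\<Sum>(k, b)\<in>S \<times> {..<dB}. c k * (x k $ (a * dB + b) * cnj (x k $ (a' * dB + b))))"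
    by (subst sum.swap) (rule sum.cartesian_product)
  also have "\<dots> = ketbra_sum dS (\<lambda>(k, b). c k) (\<lambda>(k, b). vec dS (\<lambda>a. x k $ (a * dB + b))) (S \<times> {..<dB}) $$ (a, a')"
    using a by (simp add: ketbra_sum_def case_prod_beta)
  finally show "ptrace_B dB (ketbra_sum (dS * dB) c x S) $$ (a, a') = \<dots>" .
qed (use dB in \<open>auto simp: ptrace_B_def\<close>)

lemma ptrace_B_ketbra_sum_eq_mat_sum:
  assumes dB: "dB > 0" and x: "x ` S \<subseteq> carrier_vec (dS * dB)"
  shows "ptrace_B dB (ketbra_sum (dS * dB) c x S) = mat_sum dS (\<lambda>k. c k \<cdot>\<^sub>m ptrace_B dB (ketbra (x k))) S"
proof (rule eq_matI)
  fix a a' assume "a < dim_row (mat_sum dS (\<lambda>k. c k \<cdot>\<^sub>m ptrace_B dB (ketbra (x k))) S)"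
    "a' < dim_col (mat_sum dS (\<lambda>k. c k \<cdot>\<^sub>m ptrace_B dB (ketbra (x k))) S)"
  hence a: "a < dS" "a' < dS" by simp_all
  have idx: "b < dB \<Longrightarrow> a * dB + b < dS * dB" "b < dB \<Longrightarrow> a' * dB + b < dS * dB" for b
    using mult_add_less_mult_nat[OF a(1)] mult_add_less_mult_nat[OF a(2)] by blast+
  have "ptrace_B dB (ketbra_sum (dS * dB) c x S) $$ (a, a')
      = (\<Sum>b<dB. \<Sum>k\<in>S. c k * (x k $ (a * dB + b) * cnj (x k $ (a' * dB + b))))"
    unfolding ptrace_B_index[OF dB ketbra_sum_carrier(1) a] using idx by (simp add: ketbra_sum_index)
  also have "\<dots> = (\<Sum>k\<in>S. c k * (\<Sum>b<dB. x k $ (a * dB + b) * cnj (x k $ (a' * dB + b))))"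
    by (subst sum.swap) (simp add: sum_distrib_left)
  also have "\<dots> = (\<Sum>k\<in>S. (c k \<cdot>\<^sub>m ptrace_B dB (ketbra (x k))) $$ (a, a'))"
  proof (intro sum.cong refl)
    fix k assume "k \<in> S"
    hence dim: "dim_vec (x k) = dS * dB" using x by auto
    hence K: "ketbra (x k) \<in> carrier_mat (dS * dB) (dS * dB)" by (simp add: ketbra_def)
    have "(c k \<cdot>\<^sub>m ptrace_B dB (ketbra (x k))) $$ (a, a') = c k * ptrace_B dB (ketbra (x k)) $$ (a, a')"
      using ptrace_B_carrier[OF dB K] a by simp
    also have "\<dots> = c k * (\<Sum>b<dB. x k $ (a * dB + b) * cnj (x k $ (a' * dB + b)))"
      unfolding ptrace_B_index[OF dB K a] using idx by (simp add: ketbra_def dim)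
    finally show "c k * (\<Sum>b<dB. x k $ (a * dB + b) * cnj (x k $ (a' * dB + b)))
        = (c k \<cdot>\<^sub>m ptrace_B dB (ketbra (x k))) $$ (a, a')" ..
  qed
  also have "\<dots> = mat_sum dS (\<lambda>k. c k \<cdot>\<^sub>m ptrace_B dB (ketbra (x k))) S $$ (a, a')"
    using a by (simp add: mat_sum_def)
  finally show "ptrace_B dB (ketbra_sum (dS * dB) c x S) $$ (a, a') = \<dots>" .
qed (use carrier_matD[OF ptrace_B_carrier[OF dB ketbra_sum_carrier(1)], of dS c x S] in simp_all)

section \<open>Density operators\<close>

lemma density_op_ketbra:
  assumes "v \<in> carrier_vec n" and "braket v v = 1"
  shows "density_op n (ketbra v)"
proof -
  have "ketbra v = ketbra_sum n (\<lambda>_. 1) (\<lambda>_. v) {()}"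
    using assms by (intro eq_matI) (auto simp: ketbra_def ketbra_sum_def)
  moreover have "psd (ketbra_sum n (\<lambda>_. 1) (\<lambda>_. v) {()})"
    using assms by (intro psd_ketbra_sum[where r="\<lambda>_. 1"]) auto
  ultimately show ?thesis using assms unfolding density_op_def by (simp add: mtrace_ketbra_sum)
qed

lemma density_op_rho_mc:
  assumes on: "orthonormal n v" and M: "M \<subseteq> {..<n}" "M \<noteq> {}"
  shows "density_op n (rho_mc n v M)"
proof -
  have fin: "finite M" using M(1) finite_subset by blast
  have "psd (rho_mc n v M)"
    unfolding rho_mc_def wsum_proj_eq_ketbra_sum
    by (rule psd_ketbra_sum[OF orthonormal_image_carrier[OF on M(1)], where r="\<lambda>_. 1 / real (card M)"]) auto
  moreover have "mtrace (rho_mc n v M) = 1"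
  proof -
    have "mtrace (rho_mc n v M) = (\<Sum>k\<in>M. 1 / of_nat (card M) * braket (v k) (v k))"
      unfolding rho_mc_def wsum_proj_eq_ketbra_sum by (rule mtrace_ketbra_sum[OF orthonormal_image_carrier[OF on M(1)]])
    also have "\<dots> = (\<Sum>k\<in>M. 1 / of_nat (card M))"
      using orthonormalD(2)[OF on] M(1) by (intro sum.cong refl) auto
    also have "\<dots> = 1" using M fin by (simp add: card_gt_0_iff)
    finally show ?thesis .
  qed
  ultimately show ?thesis unfolding density_op_def rho_mc_def wsum_proj_eq_ketbra_sum by simp
qed

lemma density_op_kron:
  assumes dB: "dB > 0" and \<rho>: "density_op dS \<rho>" and \<sigma>: "density_op dB \<sigma>"
  shows "density_op (dS * dB) (kron \<rho> \<sigma>)"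
proof -
  have \<rho>c: "\<rho> \<in> carrier_mat dS dS" and \<sigma>c: "\<sigma> \<in> carrier_mat dB dB"
    using \<rho> \<sigma> unfolding density_op_def by auto
  obtain a p where ona: "orthonormal dS a" and \<rho>p: "\<rho> = ketbra_sum dS (\<lambda>k. complex_of_real (p k)) a {..<dS}"
    and p: "\<And>k. k < dS \<Longrightarrow> p k \<ge> 0"
    using psd_spectral_decomposition[OF \<rho>c] \<rho> unfolding density_op_def by blast
  obtain b q where onb: "orthonormal dB b" and \<sigma>q: "\<sigma> = ketbra_sum dB (\<lambda>k. complex_of_real (q k)) b {..<dB}"
    and q: "\<And>k. k < dB \<Longrightarrow> q k \<ge> 0"
    using psd_spectral_decomposition[OF \<sigma>c] \<sigma> unfolding density_op_def by blast
  have "psd (kron \<rho> \<sigma>)"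
    unfolding \<rho>p \<sigma>q kron_ketbra_sum[OF dB]
    by (rule psd_ketbra_sum[where r="\<lambda>(i, k). p i * q k"]) (use p q in auto)
  moreover have "kron \<rho> \<sigma> \<in> carrier_mat (dS * dB) (dS * dB)" using \<rho>c \<sigma>c by (simp add: kron_def)
  moreover have "mtrace (kron \<rho> \<sigma>) = 1"
    using mtrace_kron[OF \<rho>c \<sigma>c dB] \<rho> \<sigma> unfolding density_op_def by simp
  ultimately show ?thesis unfolding density_op_def by blast
qed

lemma density_op_ptrace_B:
  assumes dB: "dB > 0" and \<rho>: "density_op (dS * dB) \<rho>"
  shows "density_op dS (ptrace_B dB \<rho>)"
proof -
  have \<rho>c: "\<rho> \<in> carrier_mat (dS * dB) (dS * dB)" using \<rho> unfolding density_op_def by auto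
  obtain u p where on: "orthonormal (dS * dB) u"
    and \<rho>p: "\<rho> = ketbra_sum (dS * dB) (\<lambda>k. complex_of_real (p k)) u {..<dS * dB}"
    and p: "\<And>k. k < dS * dB \<Longrightarrow> p k \<ge> 0"
    using psd_spectral_decomposition[OF \<rho>c] \<rho> unfolding density_op_def by blast
  have "psd (ptrace_B dB \<rho>)"
    unfolding \<rho>p ptrace_B_ketbra_sum[OF dB]
    by (rule psd_ketbra_sum[where r="\<lambda>(k, b). p k"]) (use p in auto)
  thus ?thesis
    using \<rho> ptrace_B_carrier[OF dB \<rho>c] mtrace_ptrace_B[OF dB \<rho>c] unfolding density_op_def by simp
qed

lemma local_trace_dist_le_1:
  assumes dB: "dB > 0" and \<rho>: "density_op (dS * dB) \<rho>" and \<sigma>: "density_op (dS * dB) \<sigma>"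
  shows "local_trace_dist dB \<rho> \<sigma> \<le> 1"
proof -
  have "density_op dS (ptrace_B dB \<rho>)" "density_op dS (ptrace_B dB \<sigma>)"
    using density_op_ptrace_B[OF dB] \<rho> \<sigma> by auto
  hence "trace_norm (ptrace_B dB \<rho> - ptrace_B dB \<sigma>) \<le> 1 + 1"
    using trace_norm_minus_le[of "ptrace_B dB \<rho>" dS "ptrace_B dB \<sigma>"] trace_norm_psd[of _ dS]
    unfolding density_op_def psd_def by auto
  thus ?thesis unfolding local_trace_dist_def by simp
qed

section \<open>The diagonal ensemble\<close>

lemma diagonal_weight_nonneg:
  assumes on: "orthonormal n v" and \<rho>: "density_op n \<rho>" and j: "j < n"
  shows "Re (braket (v j) (\<rho> *\<^sub>v v j)) \<ge> 0"
  using psd_braket_real(2)[of \<rho> n] \<rho> orthonormalD(1)[OF on j] unfolding density_op_def by auto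

lemma sum_diagonal_weights:
  assumes on: "orthonormal n v" and \<rho>: "density_op n \<rho>"
  shows "(\<Sum>j<n. Re (braket (v j) (\<rho> *\<^sub>v v j))) = 1"
proof -
  have "(\<Sum>j<n. braket (v j) (\<rho> *\<^sub>v v j)) = 1"
    using mtrace_orthonormal[OF on] \<rho> unfolding density_op_def by simp
  thus ?thesis by (metis Re_sum one_complex.sel(1))
qed

lemma Re_mtrace_wsum_proj_mult:
  assumes on: "orthonormal n v" and S: "S \<subseteq> {..<n}" and \<rho>: "\<rho> \<in> carrier_mat n n"
  shows "Re (mtrace (wsum_proj n (\<lambda>_. 1) v S * \<rho>)) = (\<Sum>j\<in>S. Re (braket (v j) (\<rho> *\<^sub>v v j)))"
  unfolding wsum_proj_eq_ketbra_sum mtrace_ketbra_sum_mult[OF orthonormal_image_carrier[OF on S] \<rho>]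
  by (simp add: Re_sum)

lemma diag_ensemble_eq_ketbra_sum:
  assumes on: "orthonormal n v" and \<rho>: "density_op n \<rho>"
  shows "diag_ensemble n v \<rho> = ketbra_sum n (\<lambda>j. complex_of_real (Re (braket (v j) (\<rho> *\<^sub>v v j)))) v {..<n}"
  unfolding diag_ensemble_def wsum_proj_eq_ketbra_sum
  using psd_braket_real(1)[of \<rho> n] \<rho> orthonormalD(1)[OF on] unfolding density_op_def
  by (intro eq_matI) (auto simp: ketbra_sum_def intro!: sum.cong)

text \<open>Reduced states are affine in the state, and the diagonal ensemble is a convex
  combination of the eigenstates, so convexity of the trace norm applies.\<close>

lemma local_trace_dist_diag_ensemble_le:
  assumes dB: "dB > 0" and on: "orthonormal (dS * dB) v"
    and \<rho>: "density_op (dS * dB) \<rho>" and \<sigma>: "density_op (dS * dB) \<sigma>"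
  shows "local_trace_dist dB (diag_ensemble (dS * dB) v \<rho>) \<sigma>
    \<le> (\<Sum>j<dS * dB. Re (braket (v j) (\<rho> *\<^sub>v v j)) * local_trace_dist dB (ketbra (v j)) \<sigma>)"
proof -
  define q where "q j = Re (braket (v j) (\<rho> *\<^sub>v v j))" for j
  define K where "K j = ptrace_B dB (ketbra (v j))" for j
  define R where "R = ptrace_B dB \<sigma>"
  have q0: "q j \<ge> 0" if "j < dS * dB" for j
    unfolding q_def by (rule diagonal_weight_nonneg[OF on \<rho> that])
  have K: "K j \<in> carrier_mat dS dS \<and> hermitian (K j)" if "j < dS * dB" for j
    using density_op_ptrace_B[OF dB density_op_ketbra] orthonormalD[OF on that] that
    unfolding K_def density_op_def psd_def by auto
  have R: "R \<in> carrier_mat dS dS" "hermitian R"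
    using density_op_ptrace_B[OF dB \<sigma>] unfolding R_def density_op_def psd_def by auto
  have "ptrace_B dB (diag_ensemble (dS * dB) v \<rho>) - R
      = mat_sum dS (\<lambda>j. complex_of_real (q j) \<cdot>\<^sub>m K j) {..<dS * dB} - R"
    unfolding diag_ensemble_eq_ketbra_sum[OF on \<rho>] K_def q_def
    using orthonormal_image_carrier[OF on subset_refl] by (subst ptrace_B_ketbra_sum_eq_mat_sum[OF dB]) auto
  also have "\<dots> = mat_sum dS (\<lambda>j. complex_of_real (q j) \<cdot>\<^sub>m (K j - R)) {..<dS * dB}"
    using sum_diagonal_weights[OF on \<rho>] K R unfolding q_def by (intro mat_sum_minus_convex) auto
  finally have "trace_norm (ptrace_B dB (diag_ensemble (dS * dB) v \<rho>) - R)
      \<le> (\<Sum>j<dS * dB. \<bar>q j\<bar> * trace_norm (K j - R))"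
    using K R by (auto intro!: trace_norm_mat_sum hermitian_minus)
  also have "\<dots> = (\<Sum>j<dS * dB. q j * trace_norm (K j - R))"
    using q0 by simp
  finally show ?thesis
    unfolding local_trace_dist_def K_def R_def q_def by (simp add: sum_divide_distrib[symmetric])
qed

lemma local_trace_dist_diag_ensemble_rho_mc_le:
  assumes dB: "dB > 0" and on: "orthonormal (dS * dB) v" and \<rho>: "density_op (dS * dB) \<rho>"
    and M: "M \<subseteq> {..<dS * dB}" "M \<noteq> {}" and \<epsilon>: "\<epsilon> \<ge> 0"
    and close: "\<And>j. j \<in> M \<Longrightarrow> local_trace_dist dB (ketbra (v j)) (rho_mc (dS * dB) v M) \<le> \<epsilon>"
  shows "local_trace_dist dB (diag_ensemble (dS * dB) v \<rho>) (rho_mc (dS * dB) v M)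
    \<le> \<epsilon> + Re (mtrace (wsum_proj (dS * dB) (\<lambda>_. 1) v ({..<dS * dB} - M) * \<rho>))"
proof -
  define q where "q j = Re (braket (v j) (\<rho> *\<^sub>v v j))" for j
  define L where "L j = local_trace_dist dB (ketbra (v j)) (rho_mc (dS * dB) v M)" for j
  have q0: "q j \<ge> 0" if "j < dS * dB" for j
    unfolding q_def by (rule diagonal_weight_nonneg[OF on \<rho> that])
  have L1: "L j \<le> 1" if "j < dS * dB" for j
    unfolding L_def using orthonormalD[OF on that] that
    by (intro local_trace_dist_le_1[OF dB density_op_ketbra density_op_rho_mc[OF on M]]) auto
  have qM: "(\<Sum>j\<in>M. q j) \<le> 1"
    using sum_mono2[of "{..<dS * dB}" M q] M(1) q0 sum_diagonal_weights[OF on \<rho>] unfolding q_def by auto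
  have "local_trace_dist dB (diag_ensemble (dS * dB) v \<rho>) (rho_mc (dS * dB) v M) \<le> (\<Sum>j<dS * dB. q j * L j)"
    unfolding q_def L_def by (rule local_trace_dist_diag_ensemble_le[OF dB on \<rho> density_op_rho_mc[OF on M]])
  also have "\<dots> = (\<Sum>j\<in>M. q j * L j) + (\<Sum>j\<in>{..<dS * dB} - M. q j * L j)"
    using M(1) by (subst sum.subset_diff[of M]) auto
  also have "\<dots> \<le> (\<Sum>j\<in>M. q j) * \<epsilon> + (\<Sum>j\<in>{..<dS * dB} - M. q j)"
    unfolding sum_distrib_right
  proof (intro add_mono sum_mono)
    fix j assume "j \<in> M"
    thus "q j * L j \<le> q j * \<epsilon>" using M(1) q0 close unfolding L_def by (intro mult_left_mono) auto
  next
    fix j assume "j \<in> {..<dS * dB} - M"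
    thus "q j * L j \<le> q j" using q0 L1 mult_left_mono[of "L j" 1 "q j"] by auto
  qed
  also have "(\<Sum>j\<in>M. q j) * \<epsilon> \<le> \<epsilon>" using qM \<epsilon> mult_right_mono[OF qM \<epsilon>] by simp
  also have "(\<Sum>j\<in>{..<dS * dB} - M. q j) = Re (mtrace (wsum_proj (dS * dB) (\<lambda>_. 1) v ({..<dS * dB} - M) * \<rho>))"
    using \<rho> unfolding q_def density_op_def by (simp add: Re_mtrace_wsum_proj_mult[OF on Diff_subset])
  finally show ?thesis by simp
qed

theorem lemma1:
  fixes dS :: nat and dB :: "nat \<Rightarrow> nat"
    and H \<rho>S \<rho>B :: "nat \<Rightarrow> complex mat"
    and E :: "nat \<Rightarrow> nat \<Rightarrow> real" and v :: "nat \<Rightarrow> nat \<Rightarrow> complex vec"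
    and u \<alpha> :: real and \<Delta> :: "nat \<Rightarrow> real"
  assumes dims: "dS > 0" "\<And>N. dB N > 0"
    and H_herm: "\<And>N. H N \<in> carrier_mat (dS * dB N) (dS * dB N) \<and> hermitian (H N)"
    and eig_vec: "\<And>N j. j < dS * dB N \<Longrightarrow> v N j \<in> carrier_vec (dS * dB N)"
    and eig: "\<And>N j. j < dS * dB N \<Longrightarrow> H N *\<^sub>v v N j = of_real (E N j) \<cdot>\<^sub>v v N j"
    and orthonormal: "\<And>N j k. j < dS * dB N \<Longrightarrow> k < dS * dB N \<Longrightarrow>
                         braket (v N j) (v N k) = (if j = k then 1 else 0)"
    and nondeg: "\<And>N. inj_on (E N) {..<dS * dB N}"
    and init: "\<And>N. density_op dS (\<rho>S N) \<and> density_op (dB N) (\<rho>B N)"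
    and alpha: "0 \<le> \<alpha>" "\<alpha> < 1"
    and Delta_pos: "\<And>N. \<Delta> N > 0"
    and Delta_growth: "\<Delta> \<in> O(\<lambda>N. real N powr \<alpha>)"
    and shell_ne: "\<And>N. shell (dS * dB N) (E N) (u * real N) (\<Delta> N) \<noteq> {}"
    and ETH: "\<And>\<epsilon>. \<epsilon> > 0 \<Longrightarrow> eventually (\<lambda>N. \<forall>j \<in> shell (dS * dB N) (E N) (u * real N) (\<Delta> N).
               local_trace_dist (dB N) (ketbra (v N j))
                 (rho_mc (dS * dB N) (v N) (shell (dS * dB N) (E N) (u * real N) (\<Delta> N))) < \<epsilon>)
             sequentially"
    and energy_dist: "\<And>\<epsilon>. \<epsilon> > 0 \<Longrightarrow> eventually (\<lambda>N.
               Re (mtrace (wsum_proj (dS * dB N) (\<lambda>_. 1) (v N)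
                     ({..<dS * dB N} - shell (dS * dB N) (E N) (u * real N) (\<Delta> N))
                   * kron (\<rho>S N) (\<rho>B N))) < \<epsilon>) sequentially"
  shows "\<And>\<epsilon>. \<epsilon> > 0 \<Longrightarrow> eventually (\<lambda>N.
           local_trace_dist (dB N) (diag_ensemble (dS * dB N) (v N) (kron (\<rho>S N) (\<rho>B N)))
             (rho_mc (dS * dB N) (v N) (shell (dS * dB N) (E N) (u * real N) (\<Delta> N))) < \<epsilon>)
         sequentially"
proof -
  fix \<epsilon> :: real assume "\<epsilon> > 0"
  hence \<epsilon>2: "\<epsilon> / 2 > 0" by simp
  let ?M = "\<lambda>N. shell (dS * dB N) (E N) (u * real N) (\<Delta> N)"
  have on: "orthonormal (dS * dB N) (v N)" for N
    unfolding orthonormal_def using eig_vec orthonormal by blast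
  have \<rho>: "density_op (dS * dB N) (kron (\<rho>S N) (\<rho>B N))" for N
    using density_op_kron[OF dims(2)] init by blast
  have M: "?M N \<subseteq> {..<dS * dB N}" for N unfolding shell_def by auto
  show "eventually (\<lambda>N. local_trace_dist (dB N) (diag_ensemble (dS * dB N) (v N) (kron (\<rho>S N) (\<rho>B N)))
      (rho_mc (dS * dB N) (v N) (?M N)) < \<epsilon>) sequentially"
    using ETH[OF \<epsilon>2] energy_dist[OF \<epsilon>2]
  proof eventually_elim
    case (elim N)
    have "local_trace_dist (dB N) (diag_ensemble (dS * dB N) (v N) (kron (\<rho>S N) (\<rho>B N))) (rho_mc (dS * dB N) (v N) (?M N))
      \<le> \<epsilon> / 2 + Re (mtrace (wsum_proj (dS * dB N) (\<lambda>_. 1) (v N) ({..<dS * dB N} - ?M N) * kron (\<rho>S N) (\<rho>B N)))"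
      using elim(1) \<epsilon>2
      by (intro local_trace_dist_diag_ensemble_rho_mc_le[OF dims(2) on \<rho> M shell_ne]) auto
    thus ?case using elim(2) by simp
  qed
qed

end
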